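(* Let $L,\rho_1,\rho_2,\kappa,b,k_0,\ell>0$ and $\gamma_1,\gamma_2,\gamma_3>0$ be constants and let $\mathcal{H}$, $\mathcal{A}$, $\mathcal{D}(\mathcal{A})$ be as in the context. Let $\lambda\in\mathbb{R}$, $F=(f_1,\dots,f_6)\in\mathcal{H}$, and $U=(\varphi,\psi,w,\Phi,\Psi,W)\in\mathcal{D}(\mathcal{A})$ with $(i\lambda I-\mathcal{A})U=F$, i.e. $i\lambda\varphi-\Phi=f_1$, $i\lambda\psi-\Psi=f_2$, $i\lambda w-W=f_3$, $i\lambda\rho_1\Phi-\kappa(\varphi_x+\psi+\ell w)_x-k_0\ell(w_x-\ell\varphi)=\rho_1 f_4$, $i\lambda\rho_2\Psi-b\psi_{xx}+\kappa(\varphi_x+\psi+\ell w)=\rho_2 f_5$, $i\lambda\rho_1 W-k_0(w_x-\ell\varphi)_x+\kappa\ell(\varphi_x+\psi+\ell w)=\rho_1 f_6$. Set $\mathcal{I}_\varphi=\rho_1|\Phi|^2+\kappa|\varphi_x|^2$, $\mathcal{I}_\psi=\rho_2|\Psi|^2+b|\psi_x|^2$, $\mathcal{I}_w=\rho_1|W|^2+k_0|w_x|^2$ (functions of $x\in[0,L]$). Let $q\in H^1(0,L)$ (real-valued). Then $\int_0^L q'\mathcal{I}_\varphi\,dx=\big[q\mathcal{I}_\varphi\big]_0^L-\big[k_0\ell^2 q|\varphi|^2\big]_0^L+2\kappa\,\mathrm{Re}\int_0^L q\psi_x\overline{\varphi_x}\,dx+k_0\ell^2\int_0^L q'|\varphi|^2\,dx+2(\kappa+k_0)\ell\,\mathrm{Re}\int_0^L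 q w_x\overline{\varphi_x}\,dx+R_1,$ $\int_0^L q'\mathcal{I}_\psi\,dx=\big[q\mathcal{I}_\psi\big]_0^L-\big[\kappa q|\psi|^2\big]_0^L-2\kappa\,\mathrm{Re}\int_0^L q\varphi_x\overline{\psi_x}\,dx+\kappa\int_0^L q'|\psi|^2\,dx-2\kappa\ell\,\mathrm{Re}\int_0^L q w\overline{\psi_x}\,dx+R_2,$ $\int_0^L q'\mathcal{I}_w\,dx=\big[q\mathcal{I}_w\big]_0^L-\big[\kappa\ell^2 q|w|^2\big]_0^L-2\kappa\ell\,\mathrm{Re}\int_0^L q\psi\overline{w_x}\,dx-2(\kappa+k_0)\ell\,\mathrm{Re}\int_0^L q\varphi_x\overline{w_x}\,dx+\kappa\ell^2\int_0^L q'|w|^2\,dx+R_3,$ where the remainders satisfy $|R_i|\le C\|U\|_{\mathcal{H}}\|F\|_{\mathcal{H}}$, $i=1,2,3$, for a positive constant $C$ independent of $\lambda$, $U$ and $F$.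
   Context: Let $H^1_L(0,L)=\{\phi\in H^1(0,L):\ \phi(L)=0\}$ (complex-valued functions), and let $\|\cdot\|$ denote the $L^2(0,L)$ norm. Let $\mathcal{H}=[H^1_L(0,L)]^3\times[L^2(0,L)]^3$, whose elements are written $U=(\varphi,\psi,w,\Phi,\Psi,W)$, equipped with the Hilbert norm $\|U\|_{\mathcal{H}}^2=\kappa\|\varphi_x+\psi+\ell w\|^2+\rho_1\|\Phi\|^2+b\|\psi_x\|^2+\rho_2\|\Psi\|^2+\rho_1\|W\|^2+k_0\|w_x-\ell\varphi\|^2$. Define $\mathcal{D}(\mathcal{A})=\{U\in\mathcal{H}:\ \varphi,\psi,w\in H^2(0,L),\ \Phi,\Psi,W\in H^1_L(0,L),\ \kappa(\varphi_x+\psi+\ell w)(0)=\gamma_1\Phi(0),\ b\psi_x(0)=\gamma_2\Psi(0),\ k_0(w_x-\ell\varphi)(0)=\gamma_3 W(0)\}$ and $\mathcal{A}U=\Big(\Phi,\ \Psi,\ W,\ \tfrac{\kappa}{\rho_1}(\varphi_x+\psi+\ell w)_x+\tfrac{k_0\ell}{\rho_1}(w_x-\ell\varphi),\ \tfrac{b}{\rho_2}\psi_{xx}-\tfrac{\kappa}{\rho_2}(\varphi_x+\psi+\ell w),\ \tfrac{k_0}{\rho_1}(w_x-\ell\varphi)_x-\tfrac{\kappa\ell}{\rho_1}(\varphi_x+\psi+\ell w)\Big)$. The notation $[g]_0^L$ means $g(L)-g(0)$. *)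

theory Defs
  imports "HOL-Analysis.Analysis"
begin

text \<open>Square integrability on the interval [0,L] (for functions into a Euclidean space,
  e.g. real or complex).  On a bounded interval an L2 function is also L1.\<close>
definition sqint :: "real \<Rightarrow> (real \<Rightarrow> 'a::euclidean_space) \<Rightarrow> bool" where
  "sqint L g \<longleftrightarrow> g absolutely_integrable_on {0..L} \<and>
                  (\<lambda>x. (norm (g x))^2) integrable_on {0..L}"

text \<open>f belongs to H^1(0,L) with weak derivative f' (f is taken as its absolutely continuous
  representative on [0,L]).\<close>
definition H1 :: "real \<Rightarrow> (real \<Rightarrow> 'a::euclidean_space) \<Rightarrow> (real \<Rightarrow> 'a) \<Rightarrow> bool" where
  "H1 L f f' \<longleftrightarrow> sqint L f' \<and> (\<forall>x\<in>{0..L}. f x = f 0 + integral {0..x} f')"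

definition H1L :: "real \<Rightarrow> (real \<Rightarrow> 'a::euclidean_space) \<Rightarrow> (real \<Rightarrow> 'a) \<Rightarrow> bool" where
  "H1L L f f' \<longleftrightarrow> H1 L f f' \<and> f L = 0"

definition H2 :: "real \<Rightarrow> (real \<Rightarrow> 'a::euclidean_space) \<Rightarrow> (real \<Rightarrow> 'a) \<Rightarrow> (real \<Rightarrow> 'a) \<Rightarrow> bool" where
  "H2 L f f' f'' \<longleftrightarrow> H1 L f f' \<and> H1 L f' f''"

definition L2sq :: "real \<Rightarrow> (real \<Rightarrow> complex) \<Rightarrow> real" where
  "L2sq L g = integral {0..L} (\<lambda>x. (cmod (g x))^2)"

definition Hnorm ::
  "real \<Rightarrow> real \<Rightarrow> real \<Rightarrow> real \<Rightarrow> real \<Rightarrow> real \<Rightarrow> real \<Rightarrow>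
   (real \<Rightarrow> complex) \<Rightarrow> (real \<Rightarrow> complex) \<Rightarrow> (real \<Rightarrow> complex) \<Rightarrow> (real \<Rightarrow> complex) \<Rightarrow>
   (real \<Rightarrow> complex) \<Rightarrow> (real \<Rightarrow> complex) \<Rightarrow>
   (real \<Rightarrow> complex) \<Rightarrow> (real \<Rightarrow> complex) \<Rightarrow> (real \<Rightarrow> complex) \<Rightarrow> real" where
  "Hnorm L \<kappa> \<rho>\<^sub>1 b \<rho>\<^sub>2 k\<^sub>0 l u1 du1 u2 du2 u3 du3 v1 v2 v3 =
     sqrt (\<kappa> * L2sq L (\<lambda>x. du1 x + u2 x + of_real l * u3 x)
         + \<rho>\<^sub>1 * L2sq L v1 + b * L2sq L du2 + \<rho>\<^sub>2 * L2sq L v2 + \<rho>\<^sub>1 * L2sq L v3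
         + k\<^sub>0 * L2sq L (\<lambda>x. du3 x - of_real l * u1 x))"

definition bracket :: "real \<Rightarrow> (real \<Rightarrow> real) \<Rightarrow> real" where
  "bracket L g = g L - g 0"

definition dens :: "real \<Rightarrow> real \<Rightarrow> (real \<Rightarrow> complex) \<Rightarrow> (real \<Rightarrow> complex) \<Rightarrow> real \<Rightarrow> real" where
  "dens \<rho> c V du x = \<rho> * (cmod (V x))^2 + c * (cmod (du x))^2"

end

theory Submission
  imports Defs
begin

text \<open>Each identity is the real part of a multiplier identity: test the second-order equation for
  \<open>\<phi>\<close> (resp. \<open>\<psi>\<close>, \<open>w\<close>) against \<open>2 q cnj \<phi>\<^sub>x\<close> and integrate by parts, using that
  \<open>q\<close> times the energy density has derivative \<open>q' \<I>\<^sub>\<phi> + q (\<I>\<^sub>\<phi>)'\<close>. The terms in \<open>\<lambda>\<close>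
  cancel because \<open>\<i>\<lambda>\<phi> = \<Phi> + f\<^sub>1\<close>, so \<open>\<i>\<lambda>\<phi>\<^sub>x\<close> and \<open>\<Phi>\<^sub>x + f\<^sub>1\<^sub>x\<close> are weak
  derivatives of the same function; what is left is \<open>R = 2\<rho> Re \<integral> q (\<Phi> cnj f\<^sub>1\<^sub>x + f\<^sub>4 cnj \<phi>\<^sub>x)\<close>,
  which Cauchy-Schwarz bounds by \<open>sup |q|\<close> times norms of \<open>U\<close> and \<open>F\<close>. As the energy norm only
  controls \<open>\<phi>\<^sub>x + \<psi> + l w\<close> and \<open>w\<^sub>x - l \<phi>\<close>, bounding \<open>\<phi>\<^sub>x\<close> and \<open>w\<^sub>x\<close> needs a Poincar\'e
  inequality for functions vanishing at \<open>L\<close>.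

  \<open>H\<^sup>1\<close> functions are handled as primitives of square integrable functions (Bochner integrals);
  their product rule is proved with Fubini's theorem.\<close>

abbreviation leb :: "real \<Rightarrow> real measure" where
  "leb L \<equiv> lebesgue_on {0..L}"

lemma measurable_id_leb [measurable]: "(\<lambda>x::real. x) \<in> borel_measurable (leb L)"
  by (rule continuous_imp_measurable_on_sets_lebesgue) (auto intro: continuous_intros)

lemma AE_neq_leb: "AE x in leb L. x \<noteq> t"
proof (cases "t \<in> {0..L}")
  case True
  then have "{t} \<in> null_sets (leb L)"
    by (auto simp: null_sets_restrict_space)
  from AE_not_in[OF this] show ?thesis by auto
qed (auto intro: AE_I2)

lemma lebesgue_integral_eq_integral_leb:
  fixes f :: "real \<Rightarrow> 'a::euclidean_space"
  shows "integrable (leb L) f \<Longrightarrow> integral {0..L} f = (\<integral>x. f x \<partial>leb L)"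
  by (rule lebesgue_integral_eq_integral[symmetric]) auto

lemma integrable_truncate:
  fixes f :: "real \<Rightarrow> 'a::{banach, second_countable_topology}"
  shows "integrable (leb L) f \<Longrightarrow> integrable (leb L) (\<lambda>t. if t \<le> x then f t else 0)"
  by (rule Bochner_Integration.integrable_bound[of _ f]) (auto simp: borel_measurable_integrable)

lemma integral_truncate_eq_integral:
  fixes f :: "real \<Rightarrow> 'a::euclidean_space"
  assumes f: "f absolutely_integrable_on {0..L}" and x: "x \<in> {0..L}"
  shows "(\<integral>t. (if t \<le> x then f t else 0) \<partial>leb L) = integral {0..x} f"
proof -
  have "integrable (leb L) f" by (rule absolutely_integrable_imp_integrable[OF f]) auto
  then have "(\<integral>t. (if t \<le> x then f t else 0) \<partial>leb L) = integral {0..L} (\<lambda>t. if t \<in> {..x} then f t else 0)"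
    by (simp add: lebesgue_integral_eq_integral_leb integrable_truncate)
  also have "\<dots> = integral ({..x} \<inter> {0..L}) f" by (rule integral_restrict_Int)
  also have "{..x} \<inter> {0..L} = {0..x}" using x by auto
  finally show ?thesis .
qed

section \<open>Primitives of integrable functions on [0,L]\<close>

definition prim :: "real \<Rightarrow> (real \<Rightarrow> complex) \<Rightarrow> real \<Rightarrow> complex" where
  "prim L f x = (\<integral>t. (if t \<le> x then f t else 0) \<partial>leb L)"

lemma prim_measurable [measurable]:
  assumes "integrable (leb L) f" shows "prim L f \<in> borel_measurable (leb L)"
proof -
  interpret finite_measure "leb L" by (rule finite_measure_lebesgue_on) auto
  interpret pair_sigma_finite "leb L" "leb L" ..
  have [measurable]: "f \<in> borel_measurable (leb L)" using assms by (rule borel_measurable_integrable)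
  show ?thesis unfolding prim_def by measurable
qed

lemma norm_prim_le: "integrable (leb L) f \<Longrightarrow> norm (prim L f x) \<le> (\<integral>t. norm (f t) \<partial>leb L)"
  unfolding prim_def
  by (rule order_trans[OF integral_norm_bound integral_mono]) (auto intro: integrable_truncate)

lemma prim_full: "prim L f L = (\<integral>x. f x \<partial>leb L)"
  unfolding prim_def by (rule Bochner_Integration.integral_cong) auto

lemma prim_add:
  "integrable (leb L) f \<Longrightarrow> integrable (leb L) g \<Longrightarrow> prim L (\<lambda>t. f t + g t) x = prim L f x + prim L g x"
  unfolding prim_def
  by (subst Bochner_Integration.integral_add[symmetric]) (auto intro!: integrable_truncate Bochner_Integration.integral_cong)

lemma prim_cmult: "prim L (\<lambda>t. c * f t) x = c * prim L f x"
proof -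
  have "(\<lambda>t. if t \<le> x then c * f t else 0) = (\<lambda>t. c * (if t \<le> x then f t else 0))" by auto
  then show ?thesis unfolding prim_def by simp
qed

lemma prim_cnj: "prim L (\<lambda>t. cnj (f t)) x = cnj (prim L f x)"
proof -
  have "(\<lambda>t. if t \<le> x then cnj (f t) else 0) = (\<lambda>t. cnj (if t \<le> x then f t else 0))" by auto
  then show ?thesis unfolding prim_def by simp
qed

lemma abs_Re_prim_le:
  assumes f: "integrable (leb L) f" and h: "integrable (leb L) h"
    and hb: "\<And>t. t \<in> {0..L} \<Longrightarrow> \<bar>Re (f t)\<bar> \<le> h t"
  shows "\<bar>Re (prim L f y)\<bar> \<le> (\<integral>t. h t \<partial>leb L)"
proof -
  have fy: "integrable (leb L) (\<lambda>t. if t \<le> y then f t else 0)" by (rule integrable_truncate[OF f])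
  have "\<bar>Re (prim L f y)\<bar> = \<bar>\<integral>t. Re (if t \<le> y then f t else 0) \<partial>leb L\<bar>"
    unfolding prim_def by (simp add: integral_Re[OF fy])
  also have "\<dots> \<le> (\<integral>t. \<bar>Re (if t \<le> y then f t else 0)\<bar> \<partial>leb L)"
    by (rule integral_abs_bound)
  also have "\<dots> \<le> (\<integral>t. h t \<partial>leb L)"
    by (rule integral_mono) (use integrable_Re[OF fy] h hb in \<open>auto intro: order_trans[OF abs_ge_zero]\<close>)
  finally show ?thesis .
qed

lemma integrable_mult_prim:
  assumes f: "integrable (leb L) f" and g: "integrable (leb L) g"
  shows "integrable (leb L) (\<lambda>x. g x * prim L f x)"
proof (rule Bochner_Integration.integrable_bound[where f="\<lambda>x. g x * (\<integral>t. norm (f t) \<partial>leb L)"])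
  show "integrable (leb L) (\<lambda>x. g x * complex_of_real (\<integral>t. norm (f t) \<partial>leb L))"
    using g by auto
  show "(\<lambda>x. g x * prim L f x) \<in> borel_measurable (leb L)"
    using f g by measurable
  show "AE x in leb L. norm (g x * prim L f x) \<le> norm (g x * complex_of_real (\<integral>t. norm (f t) \<partial>leb L))"
    using norm_prim_le[OF f] by (intro AE_I2) (simp add: norm_mult mult_left_mono)
qed

lemma integral_mult_prim_swap:
  assumes f: "integrable (leb L) f" and g: "integrable (leb L) g"
  shows "(\<integral>x. f x * prim L g x \<partial>leb L)
       = (\<integral>t. g t * (\<integral>x. (if t \<le> x then f x else 0) \<partial>leb L) \<partial>leb L)"
proof -
  let ?M = "leb L"
  interpret M: finite_measure ?M by (rule finite_measure_lebesgue_on) auto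
  interpret P: pair_sigma_finite ?M ?M ..
  have [measurable]: "f \<in> borel_measurable ?M" "g \<in> borel_measurable ?M"
    using f g by (auto intro: borel_measurable_integrable)
  define h where "h = (\<lambda>x t. if t \<le> x then f x * g t else 0)"
  have hm [measurable]: "case_prod h \<in> borel_measurable (?M \<Otimes>\<^sub>M ?M)"
    unfolding h_def by measurable
  have hx: "integrable ?M (h x)" for x
    by (rule Bochner_Integration.integrable_bound[of _ "\<lambda>y. f x * g y"]) (use g in \<open>auto simp: h_def\<close>)
  have "integrable ?M (\<lambda>x. \<integral>y. norm (h x y) \<partial>?M)"
  proof (rule Bochner_Integration.integrable_bound[where f="\<lambda>x. norm (f x) * (\<integral>y. norm (g y) \<partial>?M)"])
    show "integrable ?M (\<lambda>x. norm (f x) * (\<integral>y. norm (g y) \<partial>?M))"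
      using f by auto
    have "(\<integral>y. norm (h x y) \<partial>?M) \<le> norm (f x) * (\<integral>y. norm (g y) \<partial>?M)" for x
      using integral_mono[of ?M "\<lambda>y. norm (h x y)" "\<lambda>y. norm (f x) * norm (g y)"] g hx[of x]
      by (auto simp: h_def norm_mult)
    then show "AE x in ?M. norm (\<integral>y. norm (h x y) \<partial>?M) \<le> norm (norm (f x) * (\<integral>y. norm (g y) \<partial>?M))"
      by (intro AE_I2) auto
  qed measurable
  then have hi: "integrable (?M \<Otimes>\<^sub>M ?M) (case_prod h)"
    using hx by (intro P.Fubini_integrable) auto
  have "(\<integral>t. (\<integral>x. h x t \<partial>?M) \<partial>?M) = (\<integral>x. (\<integral>t. h x t \<partial>?M) \<partial>?M)"
    by (rule P.Fubini_integral[OF hi])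
  moreover have "(\<integral>t. h x t \<partial>?M) = f x * prim L g x" for x
    unfolding prim_def h_def by (simp flip: integral_mult_right_zero) (rule Bochner_Integration.integral_cong; auto)
  moreover have "(\<integral>x. h x t \<partial>?M) = g t * (\<integral>x. (if t \<le> x then f x else 0) \<partial>?M)" for t
    unfolding h_def by (simp flip: integral_mult_right_zero) (rule Bochner_Integration.integral_cong; auto)
  ultimately show ?thesis by simp
qed

lemma integral_upper_truncate:
  assumes f: "integrable (leb L) f"
  shows "(\<integral>x. (if t \<le> x then f x else 0) \<partial>leb L) = (\<integral>x. f x \<partial>leb L) - prim L f t"
proof -
  have "(\<integral>x. (if t \<le> x then f x else 0) \<partial>leb L) = (\<integral>x. f x - (if x \<le> t then f x else 0) \<partial>leb L)"
  proof (rule integral_cong_AE)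
    show "AE x in leb L. (if t \<le> x then f x else 0) = f x - (if x \<le> t then f x else 0)"
      using AE_neq_leb[where t=t] by eventually_elim auto
  qed (use f integrable_truncate[OF f] in \<open>auto intro: borel_measurable_integrable\<close>)
  also have "\<dots> = (\<integral>x. f x \<partial>leb L) - prim L f t"
    unfolding prim_def using f integrable_truncate[OF f] by (subst Bochner_Integration.integral_diff) auto
  finally show ?thesis .
qed

lemma integral_prim_product:
  assumes f: "integrable (leb L) f" and g: "integrable (leb L) g"
  shows "(\<integral>x. f x * prim L g x + prim L f x * g x \<partial>leb L) = (\<integral>x. f x \<partial>leb L) * (\<integral>x. g x \<partial>leb L)"
proof -
  have "(\<integral>x. f x * prim L g x \<partial>leb L) = (\<integral>t. g t * ((\<integral>x. f x \<partial>leb L) - prim L f t) \<partial>leb L)"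
    unfolding integral_mult_prim_swap[OF f g] integral_upper_truncate[OF f] ..
  also have "\<dots> = (\<integral>x. g x \<partial>leb L) * (\<integral>x. f x \<partial>leb L) - (\<integral>t. g t * prim L f t \<partial>leb L)"
    using integrable_mult_prim[OF f g] g by (simp add: right_diff_distrib)
  finally show ?thesis
    using integrable_mult_prim[OF f g] integrable_mult_prim[OF g f]
    by (subst Bochner_Integration.integral_add) (auto simp: mult.commute)
qed

section \<open>Square integrable functions\<close>

definition L2 :: "real \<Rightarrow> (real \<Rightarrow> complex) \<Rightarrow> bool" where
  "L2 L f \<longleftrightarrow> integrable (leb L) f \<and> integrable (leb L) (\<lambda>x. (norm (f x))^2)"

definition sqnorm :: "real \<Rightarrow> (real \<Rightarrow> complex) \<Rightarrow> real" where
  "sqnorm L f = (\<integral>x. (norm (f x))^2 \<partial>leb L)"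

lemma L2_integrable: "L2 L f \<Longrightarrow> integrable (leb L) f"
  unfolding L2_def by auto

lemma L2_measurable [measurable_dest]: "L2 L f \<Longrightarrow> f \<in> borel_measurable (leb L)"
  by (auto intro: borel_measurable_integrable L2_integrable)

lemma L2_integrable_sq: "L2 L f \<Longrightarrow> integrable (leb L) (\<lambda>x. (norm (f x))^2)"
  unfolding L2_def by auto

lemma sqint_imp_L2:
  fixes f :: "real \<Rightarrow> complex"
  assumes "sqint L f" shows "L2 L f"
  using assms unfolding sqint_def L2_def
  by (auto intro!: absolutely_integrable_imp_integrable nonnegative_absolutely_integrable_1)

lemma L2sq_eq_sqnorm: "L2 L f \<Longrightarrow> L2sq L f = sqnorm L f"
  unfolding L2sq_def sqnorm_def by (rule lebesgue_integral_eq_integral_leb) (rule L2_integrable_sq)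

lemma L2sq_nonneg: "0 \<le> L2sq L g"
  unfolding L2sq_def
  by (cases "(\<lambda>x. (cmod (g x))^2) integrable_on {0..L}") (auto intro: integral_nonneg simp: not_integrable_integral)

lemma sqnorm_nonneg: "0 \<le> sqnorm L f"
  unfolding sqnorm_def by auto

lemma sqnorm_cmult: "sqnorm L (\<lambda>x. c * f x) = (norm c)^2 * sqnorm L f"
  unfolding sqnorm_def by (simp add: norm_mult power_mult_distrib)

lemma sqnorm_cnj [simp]: "sqnorm L (\<lambda>x. cnj (f x)) = sqnorm L f"
  unfolding sqnorm_def by simp

lemma L2_const: "L2 L (\<lambda>x. c)"
  unfolding L2_def by auto

lemma L2_cnj: "L2 L f \<Longrightarrow> L2 L (\<lambda>x. cnj (f x))"
  unfolding L2_def by auto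

lemma norm_add_sq_le:
  fixes x y :: "'a::real_normed_vector"
  shows "(norm (x + y))^2 \<le> 2 * (norm x)^2 + 2 * (norm y)^2"
proof -
  have "(norm (x + y))^2 \<le> (norm x + norm y)^2"
    by (simp add: norm_triangle_ineq power_mono)
  also have "\<dots> \<le> 2 * (norm x)^2 + 2 * (norm y)^2"
    using sum_squares_bound[of "norm x" "norm y"] by (simp add: power2_sum)
  finally show ?thesis .
qed

lemma L2_add:
  assumes f: "L2 L f" and g: "L2 L g" shows "L2 L (\<lambda>x. f x + g x)"
  unfolding L2_def
proof
  show "integrable (leb L) (\<lambda>x. f x + g x)" using f g by (auto intro: L2_integrable)
  show "integrable (leb L) (\<lambda>x. (norm (f x + g x))^2)"
  proof (rule Bochner_Integration.integrable_bound[where f="\<lambda>x. 2 * (norm (f x))^2 + 2 * (norm (g x))^2"])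
    show "integrable (leb L) (\<lambda>x. 2 * (norm (f x))^2 + 2 * (norm (g x))^2)"
      using L2_integrable_sq[OF f] L2_integrable_sq[OF g] by auto
    show "(\<lambda>x. (norm (f x + g x))^2) \<in> borel_measurable (leb L)" using f g by measurable
    show "AE x in leb L. norm ((norm (f x + g x))^2) \<le> norm (2 * (norm (f x))^2 + 2 * (norm (g x))^2)"
      by (intro AE_I2) (simp add: norm_add_sq_le)
  qed
qed

lemma L2_mult_bounded:
  assumes f: "L2 L f" and h [measurable]: "h \<in> borel_measurable (leb L)"
    and B: "\<And>x. x \<in> {0..L} \<Longrightarrow> norm (h x) \<le> B"
  shows "L2 L (\<lambda>x. h x * f x)"
  unfolding L2_def
proof
  have hf: "norm (h x * f x) \<le> \<bar>B\<bar> * norm (f x)" if "x \<in> space (leb L)" for x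
    using B[of x] that by (auto simp: norm_mult intro: mult_right_mono)
  show "integrable (leb L) (\<lambda>x. h x * f x)"
  proof (rule Bochner_Integration.integrable_bound[where f="\<lambda>x. \<bar>B\<bar> * norm (f x)"])
    show "integrable (leb L) (\<lambda>x. \<bar>B\<bar> * norm (f x))" using L2_integrable[OF f] by auto
    show "(\<lambda>x. h x * f x) \<in> borel_measurable (leb L)" using f by measurable
    show "AE x in leb L. norm (h x * f x) \<le> norm (\<bar>B\<bar> * norm (f x))"
      using hf by (intro AE_I2) (simp add: abs_mult)
  qed
  show "integrable (leb L) (\<lambda>x. (norm (h x * f x))^2)"
  proof (rule Bochner_Integration.integrable_bound[where f="\<lambda>x. B^2 * (norm (f x))^2"])
    show "integrable (leb L) (\<lambda>x. B^2 * (norm (f x))^2)" using L2_integrable_sq[OF f] by auto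
    show "(\<lambda>x. (norm (h x * f x))^2) \<in> borel_measurable (leb L)" using f by measurable
    have "(norm (h x * f x))^2 \<le> B^2 * (norm (f x))^2" if "x \<in> space (leb L)" for x
      using power_mono[OF hf[OF that], of 2] by (simp add: power_mult_distrib)
    then show "AE x in leb L. norm ((norm (h x * f x))^2) \<le> norm (B^2 * (norm (f x))^2)"
      by (intro AE_I2) simp
  qed
qed

lemma L2_cmult: "L2 L f \<Longrightarrow> L2 L (\<lambda>x. c * f x)"
  using L2_mult_bounded[of L f "\<lambda>_. c" "norm c"] by auto

lemma L2_diff: "L2 L f \<Longrightarrow> L2 L g \<Longrightarrow> L2 L (\<lambda>x. f x - g x)"
  using L2_add[of L f "\<lambda>x. (-1) * g x"] L2_cmult[of L g "-1"] by simp

lemma sqnorm_add_le: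
  assumes f: "L2 L f" and g: "L2 L g"
  shows "sqnorm L (\<lambda>x. f x + g x) \<le> 2 * sqnorm L f + 2 * sqnorm L g"
proof -
  have "sqnorm L (\<lambda>x. f x + g x) \<le> (\<integral>x. 2 * (norm (f x))^2 + 2 * (norm (g x))^2 \<partial>leb L)"
    unfolding sqnorm_def using L2_integrable_sq[OF L2_add[OF f g]] L2_integrable_sq[OF f] L2_integrable_sq[OF g]
    by (intro integral_mono) (auto simp: norm_add_sq_le)
  also have "\<dots> = 2 * sqnorm L f + 2 * sqnorm L g"
    unfolding sqnorm_def using L2_integrable_sq[OF f] L2_integrable_sq[OF g] by simp
  finally show ?thesis .
qed

lemma sqnorm_mult_bounded_le:
  assumes f: "L2 L f" and h: "h \<in> borel_measurable (leb L)" and B: "\<And>x. x \<in> {0..L} \<Longrightarrow> norm (h x) \<le> B"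
  shows "sqnorm L (\<lambda>x. h x * f x) \<le> B^2 * sqnorm L f"
proof -
  have "(norm (h x * f x))^2 \<le> B^2 * (norm (f x))^2" if "x \<in> space (leb L)" for x
  proof -
    have "(norm (h x))^2 \<le> B^2" using B[of x] that by (simp add: power_mono)
    then show ?thesis by (simp add: norm_mult power_mult_distrib mult_right_mono)
  qed
  then have "sqnorm L (\<lambda>x. h x * f x) \<le> (\<integral>x. B^2 * (norm (f x))^2 \<partial>leb L)"
    unfolding sqnorm_def
    using L2_integrable_sq[OF L2_mult_bounded[OF f h B]] L2_integrable_sq[OF f]
    by (intro integral_mono) auto
  then show ?thesis unfolding sqnorm_def by simp
qed

lemma integrable_norm_mult_norm:
  assumes f: "L2 L f" and g: "L2 L g"
  shows "integrable (leb L) (\<lambda>x. norm (f x) * norm (g x))"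
proof (rule Bochner_Integration.integrable_bound[where f="\<lambda>x. (norm (f x))^2 + (norm (g x))^2"])
  show "integrable (leb L) (\<lambda>x. (norm (f x))^2 + (norm (g x))^2)"
    using L2_integrable_sq[OF f] L2_integrable_sq[OF g] by auto
  show "(\<lambda>x. norm (f x) * norm (g x)) \<in> borel_measurable (leb L)" using f g by measurable
  show "AE x in leb L. norm (norm (f x) * norm (g x)) \<le> norm ((norm (f x))^2 + (norm (g x))^2)"
  proof (intro AE_I2)
    fix x
    have "norm (f x) * norm (g x) \<le> (norm (f x))^2 + (norm (g x))^2"
      using sum_squares_bound[of "norm (f x)" "norm (g x)"] mult_nonneg_nonneg[OF norm_ge_zero norm_ge_zero, of "f x" "g x"]
      unfolding mult.assoc by linarith
    then show "norm (norm (f x) * norm (g x)) \<le> norm ((norm (f x))^2 + (norm (g x))^2)" by simp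
  qed
qed

lemma integrable_L2_mult:
  assumes f: "L2 L f" and g: "L2 L g"
  shows "integrable (leb L) (\<lambda>x. f x * g x)"
  by (rule Bochner_Integration.integrable_bound[OF integrable_norm_mult_norm[OF f g]])
    (use f g in \<open>auto simp: norm_mult\<close>)

lemma Cauchy_Schwarz_integral:
  assumes f: "L2 L f" and g: "L2 L g"
  shows "norm (\<integral>x. f x * g x \<partial>leb L) \<le> sqrt (sqnorm L f) * sqrt (sqnorm L g)"
proof -
  have fg: "integrable (leb L) (\<lambda>x. norm (f x) * norm (g x))" by (rule integrable_norm_mult_norm[OF f g])
  have "ennreal ((\<integral>x. norm (f x) * norm (g x) \<partial>leb L)^2) = (\<integral>\<^sup>+x. norm (f x) * norm (g x) \<partial>leb L)^2"
    using fg by (simp add: nn_integral_eq_integral ennreal_power)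
  also have "\<dots> \<le> (\<integral>\<^sup>+x. ennreal ((norm (f x))^2) \<partial>leb L) * (\<integral>\<^sup>+x. ennreal ((norm (g x))^2) \<partial>leb L)"
    using Cauchy_Schwarz_nn_integral[of "\<lambda>x. norm (f x)" "leb L" "\<lambda>x. norm (g x)"] f g
    by (simp add: ennreal_mult ennreal_power)
  also have "\<dots> = ennreal (sqnorm L f * sqnorm L g)"
    unfolding sqnorm_def using L2_integrable_sq[OF f] L2_integrable_sq[OF g]
    by (simp add: nn_integral_eq_integral ennreal_mult)
  finally have "(\<integral>x. norm (f x) * norm (g x) \<partial>leb L)^2 \<le> sqnorm L f * sqnorm L g"
    by (simp add: ennreal_le_iff sqnorm_nonneg)
  then have "(\<integral>x. norm (f x) * norm (g x) \<partial>leb L) \<le> sqrt (sqnorm L f) * sqrt (sqnorm L g)"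
    by (simp add: real_le_rsqrt flip: real_sqrt_mult)
  then show ?thesis
    using integral_norm_bound[of "leb L" "\<lambda>x. f x * g x"] unfolding norm_mult by linarith
qed

section \<open>Weak derivatives\<close>

definition has_weak_deriv :: "real \<Rightarrow> (real \<Rightarrow> complex) \<Rightarrow> (real \<Rightarrow> complex) \<Rightarrow> bool" where
  "has_weak_deriv L F f \<longleftrightarrow> L2 L f \<and> (\<forall>x\<in>{0..L}. F x = F 0 + prim L f x)"

lemma has_weak_derivI:
  "L2 L f \<Longrightarrow> (\<And>x. x \<in> {0..L} \<Longrightarrow> F x = F 0 + prim L f x) \<Longrightarrow> has_weak_deriv L F f"
  unfolding has_weak_deriv_def by blast

lemma has_weak_derivD: "has_weak_deriv L F f \<Longrightarrow> x \<in> {0..L} \<Longrightarrow> F x = F 0 + prim L f x"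
  unfolding has_weak_deriv_def by blast

lemma has_weak_deriv_L2_deriv: "has_weak_deriv L F f \<Longrightarrow> L2 L f"
  unfolding has_weak_deriv_def by blast

lemma has_weak_deriv_measurable:
  assumes "has_weak_deriv L F f" shows "F \<in> borel_measurable (leb L)"
proof -
  have "integrable (leb L) f" using assms by (auto intro: L2_integrable has_weak_deriv_L2_deriv)
  then have "(\<lambda>x. F 0 + prim L f x) \<in> borel_measurable (leb L)" by measurable
  moreover have "x \<in> space (leb L) \<Longrightarrow> F x = F 0 + prim L f x" for x
    by (rule has_weak_derivD[OF assms]) simp
  ultimately show ?thesis by (metis (no_types, lifting) measurable_cong)
qed

lemma norm_le_weak_deriv_bound:
  assumes "has_weak_deriv L F f" "x \<in> {0..L}"
  shows "norm (F x) \<le> norm (F 0) + (\<integral>t. norm (f t) \<partial>leb L)"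
  using has_weak_derivD[OF assms] norm_prim_le[OF L2_integrable[OF has_weak_deriv_L2_deriv[OF assms(1)]], of x]
    norm_triangle_ineq[of "F 0" "prim L f x"]
  by simp

lemma has_weak_deriv_L2:
  assumes "has_weak_deriv L F f" shows "L2 L F"
  using L2_mult_bounded[OF L2_const[of L 1] has_weak_deriv_measurable[OF assms] norm_le_weak_deriv_bound[OF assms]]
  by simp

lemma has_weak_deriv_zero: "has_weak_deriv L (\<lambda>_. 0) (\<lambda>_. 0)"
  by (rule has_weak_derivI) (auto simp: L2_const prim_def)

lemma has_weak_deriv_add:
  assumes F: "has_weak_deriv L F f" and G: "has_weak_deriv L G g"
  shows "has_weak_deriv L (\<lambda>x. F x + G x) (\<lambda>x. f x + g x)"
proof (rule has_weak_derivI)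
  have f: "L2 L f" and g: "L2 L g" using F G by (auto intro: has_weak_deriv_L2_deriv)
  then show "L2 L (\<lambda>x. f x + g x)" by (rule L2_add)
  show "F x + G x = F 0 + G 0 + prim L (\<lambda>x. f x + g x) x" if "x \<in> {0..L}" for x
    using has_weak_derivD[OF F that] has_weak_derivD[OF G that] prim_add[OF L2_integrable[OF f] L2_integrable[OF g]]
    by simp
qed

lemma has_weak_deriv_cmult:
  assumes F: "has_weak_deriv L F f" shows "has_weak_deriv L (\<lambda>x. c * F x) (\<lambda>x. c * f x)"
proof (rule has_weak_derivI)
  show "L2 L (\<lambda>x. c * f x)" by (rule L2_cmult[OF has_weak_deriv_L2_deriv[OF F]])
  show "c * F x = c * F 0 + prim L (\<lambda>x. c * f x) x" if "x \<in> {0..L}" for x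
    unfolding prim_cmult has_weak_derivD[OF F that] by (simp add: distrib_left)
qed

lemma has_weak_deriv_cnj:
  assumes F: "has_weak_deriv L F f" shows "has_weak_deriv L (\<lambda>x. cnj (F x)) (\<lambda>x. cnj (f x))"
proof (rule has_weak_derivI)
  show "L2 L (\<lambda>x. cnj (f x))" by (rule L2_cnj[OF has_weak_deriv_L2_deriv[OF F]])
  show "cnj (F x) = cnj (F 0) + prim L (\<lambda>x. cnj (f x)) x" if "x \<in> {0..L}" for x
    unfolding prim_cnj has_weak_derivD[OF F that] by simp
qed

lemma has_weak_deriv_diff:
  "has_weak_deriv L F f \<Longrightarrow> has_weak_deriv L G g \<Longrightarrow> has_weak_deriv L (\<lambda>x. F x - G x) (\<lambda>x. f x - g x)"
  using has_weak_deriv_add[of L F f "\<lambda>x. (-1) * G x" "\<lambda>x. (-1) * g x"] has_weak_deriv_cmult[of L G g "-1"]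
  by simp

lemma has_weak_deriv_cong:
  assumes "has_weak_deriv L F f" "L \<ge> 0" "\<And>x. x \<in> {0..L} \<Longrightarrow> F x = G x"
  shows "has_weak_deriv L G f"
proof (rule has_weak_derivI)
  show "L2 L f" by (rule has_weak_deriv_L2_deriv[OF assms(1)])
  show "G x = G 0 + prim L f x" if "x \<in> {0..L}" for x
    using has_weak_derivD[OF assms(1) that] assms(3)[OF that] assms(3)[of 0] assms(2) by simp
qed

lemma has_weak_deriv_FTC:
  assumes "has_weak_deriv L F f" "L \<ge> 0"
  shows "F L - F 0 = (\<integral>x. f x \<partial>leb L)"
  using has_weak_derivD[OF assms(1), of L] assms(2) by (simp add: prim_full)

lemma has_weak_deriv_mult:
  assumes F: "has_weak_deriv L F f" and G: "has_weak_deriv L G g"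
  shows "has_weak_deriv L (\<lambda>x. F x * G x) (\<lambda>x. f x * G x + F x * g x)"
proof (rule has_weak_derivI)
  have f2: "L2 L f" and g2: "L2 L g" using F G by (auto intro: has_weak_deriv_L2_deriv)
  have fi: "integrable (leb L) f" and gi: "integrable (leb L) g" using f2 g2 by (auto intro: L2_integrable)
  have "L2 L (\<lambda>x. G x * f x)" "L2 L (\<lambda>x. F x * g x)"
    using L2_mult_bounded[OF f2 has_weak_deriv_measurable[OF G] norm_le_weak_deriv_bound[OF G]]
      L2_mult_bounded[OF g2 has_weak_deriv_measurable[OF F] norm_le_weak_deriv_bound[OF F]] by auto
  then show "L2 L (\<lambda>x. f x * G x + F x * g x)"
    using L2_add by (simp add: mult.commute)
  fix x assume x: "x \<in> {0..L}"
  define fx where "fx = (\<lambda>t. if t \<le> x then f t else 0)"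
  define gx where "gx = (\<lambda>t. if t \<le> x then g t else 0)"
  have fxi: "integrable (leb L) fx" and gxi: "integrable (leb L) gx"
    unfolding fx_def gx_def using fi gi by (auto intro: integrable_truncate)
  have "prim L f t = prim L fx t" "prim L g t = prim L gx t" if "t \<le> x" for t
    unfolding prim_def fx_def gx_def using that by (auto intro!: Bochner_Integration.integral_cong)
  then have "(if t \<le> x then f t * G t + F t * g t else 0)
      = fx t * G 0 + F 0 * gx t + (fx t * prim L gx t + prim L fx t * gx t)" if "t \<in> {0..L}" for t
    using has_weak_derivD[OF F that] has_weak_derivD[OF G that]
    by (cases "t \<le> x") (simp_all add: fx_def gx_def algebra_simps)
  then have "prim L (\<lambda>x. f x * G x + F x * g x) x
      = (\<integral>t. fx t * G 0 + F 0 * gx t + (fx t * prim L gx t + prim L fx t * gx t) \<partial>leb L)"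
    unfolding prim_def by (intro Bochner_Integration.integral_cong) auto
  also have "\<dots> = (\<integral>t. fx t \<partial>leb L) * G 0 + F 0 * (\<integral>t. gx t \<partial>leb L)
      + (\<integral>t. fx t * prim L gx t + prim L fx t * gx t \<partial>leb L)"
    using fxi gxi integrable_mult_prim[OF gxi fxi] integrable_mult_prim[OF fxi gxi]
    by (subst Bochner_Integration.integral_add, auto simp: mult.commute)+
  also have "\<dots> = prim L f x * G 0 + F 0 * prim L g x + prim L f x * prim L g x"
    unfolding integral_prim_product[OF fxi gxi] by (simp add: prim_def fx_def gx_def)
  also have "\<dots> = F x * G x - F 0 * G 0"
    unfolding has_weak_derivD[OF F x] has_weak_derivD[OF G x] by (simp add: algebra_simps)
  finally show "F x * G x = F 0 * G 0 + prim L (\<lambda>x. f x * G x + F x * g x) x" by simp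
qed

lemma integration_by_parts:
  assumes F: "has_weak_deriv L F f" and G: "has_weak_deriv L G g" and L: "L \<ge> 0"
  shows "F L * G L - F 0 * G 0 = (\<integral>x. f x * G x \<partial>leb L) + (\<integral>x. F x * g x \<partial>leb L)"
proof -
  have "integrable (leb L) (\<lambda>x. f x * G x)" "integrable (leb L) (\<lambda>x. F x * g x)"
    using integrable_L2_mult[OF has_weak_deriv_L2_deriv[OF F] has_weak_deriv_L2[OF G]]
      integrable_L2_mult[OF has_weak_deriv_L2[OF F] has_weak_deriv_L2_deriv[OF G]] .
  then show ?thesis
    using has_weak_deriv_FTC[OF has_weak_deriv_mult[OF F G] L] by simp
qed

text \<open>Weak derivatives are unique in the weak sense; this is all we need of uniqueness.\<close>

lemma has_weak_deriv_integral_eq: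
  assumes F1: "has_weak_deriv L F f" and F2: "has_weak_deriv L F g"
    and h: "has_weak_deriv L h dh" and L: "L \<ge> 0"
  shows "(\<integral>x. h x * f x \<partial>leb L) = (\<integral>x. h x * g x \<partial>leb L)"
  using integration_by_parts[OF h F1 L] integration_by_parts[OF h F2 L] by simp

lemma H1_imp_has_weak_deriv:
  fixes F f :: "real \<Rightarrow> complex"
  assumes "H1 L F f" shows "has_weak_deriv L F f"
proof (rule has_weak_derivI)
  show "L2 L f" using assms unfolding H1_def by (auto intro: sqint_imp_L2)
  have f: "f absolutely_integrable_on {0..L}" using assms unfolding H1_def sqint_def by blast
  show "F x = F 0 + prim L f x" if x: "x \<in> {0..L}" for x
  proof -
    have "F x = F 0 + integral {0..x} f" using assms x unfolding H1_def by blast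
    then show ?thesis unfolding prim_def integral_truncate_eq_integral[OF f x] .
  qed
qed

lemma H1_real_imp_has_weak_deriv:
  fixes q dq :: "real \<Rightarrow> real"
  assumes q: "H1 L q dq"
  shows "has_weak_deriv L (\<lambda>x. complex_of_real (q x)) (\<lambda>x. complex_of_real (dq x))"
proof (rule has_weak_derivI)
  have dq: "dq absolutely_integrable_on {0..L}" "(\<lambda>x. (dq x)^2) integrable_on {0..L}"
    using q unfolding H1_def sqint_def by auto
  then have "integrable (leb L) dq" "integrable (leb L) (\<lambda>x. (dq x)^2)"
    by (auto intro!: absolutely_integrable_imp_integrable nonnegative_absolutely_integrable_1)
  then show "L2 L (\<lambda>x. complex_of_real (dq x))" unfolding L2_def by auto
  fix x assume x: "x \<in> {0..L}"
  have "(\<lambda>t. if t \<le> x then complex_of_real (dq t) else 0) = (\<lambda>t. complex_of_real (if t \<le> x then dq t else 0))"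
    by auto
  then have "prim L (\<lambda>x. complex_of_real (dq x)) x = complex_of_real (integral {0..x} dq)"
    unfolding prim_def using integral_truncate_eq_integral[OF dq(1) x] by simp
  moreover have "q x = q 0 + integral {0..x} dq" using q x unfolding H1_def by blast
  ultimately show "complex_of_real (q x) = complex_of_real (q 0) + prim L (\<lambda>x. complex_of_real (dq x)) x"
    by simp
qed

section \<open>Poincar\'e inequalities and the energy norm\<close>

lemma two_mult_le_weighted_squares: "e > 0 \<Longrightarrow> 2 * (a::real) * b \<le> e * a^2 + b^2 / e"
  using sum_squares_bound[of "sqrt e * a" "b / sqrt e"]
  by (simp add: power_mult_distrib power_divide)

lemma Re_mult_cnj: "Re (z * cnj z) = (norm z)^2"
  by (metis Re_complex_of_real complex_norm_square)

lemma integral_leb_le_const: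
  fixes g :: "real \<Rightarrow> real"
  assumes "integrable (leb L) g" "\<And>x. x \<in> {0..L} \<Longrightarrow> g x \<le> K" "L \<ge> 0"
  shows "(\<integral>x. g x \<partial>leb L) \<le> L * K"
proof -
  have "(\<integral>x. g x \<partial>leb L) \<le> (\<integral>x. K \<partial>leb L)"
    by (rule integral_mono) (use assms in auto)
  then show ?thesis using assms(3) by (simp add: measure_restrict_space)
qed

lemma sqnorm_add_cmult_le:
  assumes "L2 L f" "L2 L g"
  shows "sqnorm L (\<lambda>x. f x + c * g x) \<le> 2 * sqnorm L f + 2 * (norm c)^2 * sqnorm L g"
  using sqnorm_add_le[OF assms(1) L2_cmult[OF assms(2)]] by (simp add: sqnorm_cmult mult.assoc)

lemma abs_Re_le_of_weak_deriv_vanishing: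
  assumes E: "has_weak_deriv L E dE" and EL: "E L = 0" and L: "L \<ge> 0"
    and h: "integrable (leb L) h" and hb: "\<And>t. t \<in> {0..L} \<Longrightarrow> \<bar>Re (dE t)\<bar> \<le> h t"
    and x: "x \<in> {0..L}"
  shows "\<bar>Re (E x)\<bar> \<le> 2 * (\<integral>t. h t \<partial>leb L)"
proof -
  have "E x = prim L dE x - prim L dE L"
    using has_weak_derivD[OF E x] has_weak_derivD[OF E, of L] EL L by (simp add: eq_neg_iff_add_eq_0)
  moreover have dE: "integrable (leb L) dE" by (rule L2_integrable[OF has_weak_deriv_L2_deriv[OF E]])
  ultimately show ?thesis
    using abs_Re_prim_le[OF dE h hb, of x] abs_Re_prim_le[OF dE h hb, of L] by simp
qed

text \<open>The coupling terms \<open>l u3 cnj u1\<close> and \<open>l u1 cnj u3\<close> cancel in the real part.\<close>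

lemma abs_Re_deriv_norm_sq_le:
  fixes e l :: real and u1 d1 u3 d3 :: complex
  assumes e: "e > 0"
  shows "\<bar>Re ((d1 * cnj u1 + u1 * cnj d1) + (d3 * cnj u3 + u3 * cnj d3))\<bar>
    \<le> e * ((norm u1)^2 + (norm u3)^2) + ((norm (d1 + of_real l * u3))^2 + (norm (d3 - of_real l * u1))^2) / e"
proof -
  have "Re ((d1 * cnj u1 + u1 * cnj d1) + (d3 * cnj u3 + u3 * cnj d3))
      = 2 * Re ((d1 + of_real l * u3) * cnj u1) + 2 * Re ((d3 - of_real l * u1) * cnj u3)"
    by (simp add: algebra_simps)
  also have "\<bar>\<dots>\<bar> \<le> 2 * norm u1 * norm (d1 + of_real l * u3) + 2 * norm u3 * norm (d3 - of_real l * u1)"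
    using abs_Re_le_cmod[of "(d1 + of_real l * u3) * cnj u1"] abs_Re_le_cmod[of "(d3 - of_real l * u1) * cnj u3"]
    by (simp add: norm_mult mult.commute)
  also have "\<dots> \<le> e * ((norm u1)^2 + (norm u3)^2) + ((norm (d1 + of_real l * u3))^2 + (norm (d3 - of_real l * u1))^2) / e"
    using two_mult_le_weighted_squares[OF e, of "norm u1" "norm (d1 + of_real l * u3)"]
      two_mult_le_weighted_squares[OF e, of "norm u3" "norm (d3 - of_real l * u1)"]
    by (simp add: add_divide_distrib distrib_left)
  finally show ?thesis .
qed

lemma coupled_Poincare:
  fixes l :: real
  assumes L: "L > 0" and u1: "has_weak_deriv L u1 du1" and u3: "has_weak_deriv L u3 du3"
    and z1: "u1 L = 0" and z3: "u3 L = 0"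
  shows "sqnorm L u1 + sqnorm L u3
    \<le> 16 * L^2 * (sqnorm L (\<lambda>x. du1 x + of_real l * u3 x) + sqnorm L (\<lambda>x. du3 x - of_real l * u1 x))"
proof -
  define A where "A = (\<lambda>x. du1 x + of_real l * u3 x)"
  define c where "c = (\<lambda>x. du3 x - of_real l * u1 x)"
  define e where "e = 1 / (4 * L)"
  have e: "e > 0" using L by (simp add: e_def)
  have u1L2: "L2 L u1" and u3L2: "L2 L u3" by (rule has_weak_deriv_L2[OF u1], rule has_weak_deriv_L2[OF u3])
  have AL2: "L2 L A" unfolding A_def by (rule L2_add[OF has_weak_deriv_L2_deriv[OF u1] L2_cmult[OF u3L2]])
  have cL2: "L2 L c" unfolding c_def by (rule L2_diff[OF has_weak_deriv_L2_deriv[OF u3] L2_cmult[OF u1L2]])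
  note sq = L2_integrable_sq[OF u1L2] L2_integrable_sq[OF u3L2] L2_integrable_sq[OF AL2] L2_integrable_sq[OF cL2]
  have E: "has_weak_deriv L (\<lambda>x. u1 x * cnj (u1 x) + u3 x * cnj (u3 x))
       (\<lambda>x. (du1 x * cnj (u1 x) + u1 x * cnj (du1 x)) + (du3 x * cnj (u3 x) + u3 x * cnj (du3 x)))"
    by (intro has_weak_deriv_add has_weak_deriv_mult has_weak_deriv_cnj u1 u3)
  define h where "h = (\<lambda>t. e * ((norm (u1 t))^2 + (norm (u3 t))^2) + ((norm (A t))^2 + (norm (c t))^2) / e)"
  have hi: "integrable (leb L) h" unfolding h_def using sq by auto
  have hint: "(\<integral>t. h t \<partial>leb L) = e * (sqnorm L u1 + sqnorm L u3) + (sqnorm L A + sqnorm L c) / e"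
    unfolding h_def sqnorm_def using sq by (simp add: add_divide_distrib)
  have pt: "(norm (u1 x))^2 + (norm (u3 x))^2 \<le> 2 * (\<integral>t. h t \<partial>leb L)" if "x \<in> {0..L}" for x
  proof -
    have "\<bar>Re (u1 x * cnj (u1 x) + u3 x * cnj (u3 x))\<bar> \<le> 2 * (\<integral>t. h t \<partial>leb L)"
      using abs_Re_le_of_weak_deriv_vanishing[OF E _ _ hi _ that] z1 z3 L
        abs_Re_deriv_norm_sq_le[OF e] unfolding h_def A_def c_def by simp
    then show ?thesis unfolding plus_complex.sel Re_mult_cnj by simp
  qed
  have "sqnorm L u1 + sqnorm L u3 = (\<integral>x. (norm (u1 x))^2 + (norm (u3 x))^2 \<partial>leb L)"
    unfolding sqnorm_def using sq by simp
  also have "\<dots> \<le> L * (2 * (\<integral>t. h t \<partial>leb L))"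
    by (rule integral_leb_le_const) (use pt sq L in auto)
  also have "\<dots> = (sqnorm L u1 + sqnorm L u3) / 2 + 16 * L^2 * (sqnorm L A + sqnorm L c) / 2"
    unfolding hint using L unfolding e_def by (simp add: field_simps power2_eq_square)
  finally show ?thesis unfolding A_def c_def mult.assoc by argo
qed

lemma Poincare:
  assumes "L > 0" "has_weak_deriv L u du" "u L = 0"
  shows "sqnorm L u \<le> 16 * L^2 * sqnorm L du"
  using coupled_Poincare[OF assms(1,2) has_weak_deriv_zero assms(3), of 0] by (simp add: sqnorm_def)

lemma sqnorm_derivs_le_energy:
  fixes l :: real
  assumes L: "L > 0" and u1: "has_weak_deriv L u1 du1" and u2: "has_weak_deriv L u2 du2"
    and u3: "has_weak_deriv L u3 du3" and z1: "u1 L = 0" and z2: "u2 L = 0" and z3: "u3 L = 0"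
  defines "S \<equiv> sqnorm L (\<lambda>x. du1 x + u2 x + of_real l * u3 x) + sqnorm L du2
      + sqnorm L (\<lambda>x. du3 x - of_real l * u1 x)"
  shows "sqnorm L du1 \<le> (2 + 32 * l^2 * L^2) * (2 + 32 * L^2) * S"
    and "sqnorm L du3 \<le> (2 + 32 * l^2 * L^2) * (2 + 32 * L^2) * S"
proof -
  define a where "a = (\<lambda>x. du1 x + u2 x + of_real l * u3 x)"
  define A where "A = (\<lambda>x. du1 x + of_real l * u3 x)"
  define c where "c = (\<lambda>x. du3 x - of_real l * u1 x)"
  have u1L2: "L2 L u1" and u2L2: "L2 L u2" and u3L2: "L2 L u3"
    using u1 u2 u3 by (auto intro: has_weak_deriv_L2)
  have aL2: "L2 L a"
    unfolding a_def by (intro L2_add L2_cmult has_weak_deriv_L2_deriv[OF u1] u2L2 u3L2)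
  have AL2: "L2 L A" unfolding A_def by (intro L2_add L2_cmult has_weak_deriv_L2_deriv[OF u1] u3L2)
  have cL2: "L2 L c" unfolding c_def by (intro L2_diff L2_cmult has_weak_deriv_L2_deriv[OF u3] u1L2)
  define Y where "Y = sqnorm L A + sqnorm L c"
  have "sqnorm L A \<le> 2 * sqnorm L a + 2 * sqnorm L u2"
    using sqnorm_add_cmult_le[OF aL2 u2L2, of "-1"] unfolding a_def A_def by simp
  then have "Y \<le> 2 * sqnorm L a + 32 * L^2 * sqnorm L du2 + sqnorm L c"
    unfolding Y_def using Poincare[OF L u2 z2] by simp
  also have "\<dots> \<le> (2 + 32 * L^2) * S"
    unfolding S_def a_def c_def
    using sqnorm_nonneg[of L a] sqnorm_nonneg[of L du2] sqnorm_nonneg[of L c]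
    by (simp add: algebra_simps a_def c_def)
  finally have YS: "Y \<le> (2 + 32 * L^2) * S" .
  have Y: "sqnorm L u1 \<le> 16 * L^2 * Y" "sqnorm L u3 \<le> 16 * L^2 * Y"
    using coupled_Poincare[OF L u1 u3 z1 z3, of l] sqnorm_nonneg[of L u1] sqnorm_nonneg[of L u3]
    unfolding Y_def A_def c_def by linarith+
  have K: "2 * Y + 2 * l^2 * (16 * L^2 * Y) \<le> (2 + 32 * l^2 * L^2) * (2 + 32 * L^2) * S"
    using mult_left_mono[OF YS, of "2 + 32 * l^2 * L^2"] by (simp add: algebra_simps)
  have "sqnorm L du1 \<le> 2 * sqnorm L A + 2 * l^2 * sqnorm L u3"
    using sqnorm_add_cmult_le[OF AL2 u3L2, of "- of_real l"] unfolding A_def by simp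
  also have "\<dots> \<le> 2 * Y + 2 * l^2 * (16 * L^2 * Y)"
    using Y sqnorm_nonneg[of L c] unfolding Y_def by (intro add_mono mult_left_mono) auto
  finally show "sqnorm L du1 \<le> (2 + 32 * l^2 * L^2) * (2 + 32 * L^2) * S" using K by linarith
  have "sqnorm L du3 \<le> 2 * sqnorm L c + 2 * l^2 * sqnorm L u1"
    using sqnorm_add_cmult_le[OF cL2 u1L2, of "of_real l"] unfolding c_def by simp
  also have "\<dots> \<le> 2 * Y + 2 * l^2 * (16 * L^2 * Y)"
    using Y sqnorm_nonneg[of L A] unfolding Y_def by (intro add_mono mult_left_mono) auto
  finally show "sqnorm L du3 \<le> (2 + 32 * l^2 * L^2) * (2 + 32 * L^2) * S" using K by linarith
qed

lemma Hnorm_nonneg: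
  assumes "\<kappa> > 0" "\<rho>1 > 0" "b > 0" "\<rho>2 > 0" "k0 > 0"
  shows "0 \<le> Hnorm L \<kappa> \<rho>1 b \<rho>2 k0 l u1 du1 u2 du2 u3 du3 v1 v2 v3"
  unfolding Hnorm_def using assms
  by (intro real_sqrt_ge_zero add_nonneg_nonneg mult_nonneg_nonneg) (auto intro: L2sq_nonneg less_imp_le)

definition energy_const :: "real \<Rightarrow> real \<Rightarrow> real \<Rightarrow> real \<Rightarrow> real \<Rightarrow> real \<Rightarrow> real \<Rightarrow> real" where
  "energy_const L \<kappa> \<rho>1 b \<rho>2 k0 l
    = ((2 + 32 * l^2 * L^2) * (2 + 32 * L^2) + 1) / min \<kappa> (min \<rho>1 (min b (min \<rho>2 k0)))"

lemma energy_const_nonneg: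
  "\<kappa> > 0 \<Longrightarrow> \<rho>1 > 0 \<Longrightarrow> b > 0 \<Longrightarrow> \<rho>2 > 0 \<Longrightarrow> k0 > 0 \<Longrightarrow> 0 \<le> energy_const L \<kappa> \<rho>1 b \<rho>2 k0 l"
  unfolding energy_const_def by simp

lemma sqnorms_le_Hnorm:
  fixes \<kappa> \<rho>1 b \<rho>2 k0 l L :: real
  assumes L: "L > 0" and pos: "\<kappa> > 0" "\<rho>1 > 0" "b > 0" "\<rho>2 > 0" "k0 > 0"
    and u1: "has_weak_deriv L u1 du1" and u2: "has_weak_deriv L u2 du2" and u3: "has_weak_deriv L u3 du3"
    and z1: "u1 L = 0" and z2: "u2 L = 0" and z3: "u3 L = 0"
    and v1: "L2 L v1" and v2: "L2 L v2" and v3: "L2 L v3"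
  defines "K \<equiv> energy_const L \<kappa> \<rho>1 b \<rho>2 k0 l"
    and "N \<equiv> Hnorm L \<kappa> \<rho>1 b \<rho>2 k0 l u1 du1 u2 du2 u3 du3 v1 v2 v3"
  shows "sqnorm L du1 \<le> K * N^2 \<and> sqnorm L du2 \<le> K * N^2 \<and> sqnorm L du3 \<le> K * N^2
    \<and> sqnorm L v1 \<le> K * N^2 \<and> sqnorm L v2 \<le> K * N^2 \<and> sqnorm L v3 \<le> K * N^2"
proof -
  define \<mu> where "\<mu> = min \<kappa> (min \<rho>1 (min b (min \<rho>2 k0)))"
  define K0 where "K0 = (2 + 32 * l^2 * L^2) * (2 + 32 * L^2)"
  define a where "a = (\<lambda>x. du1 x + u2 x + of_real l * u3 x)"
  define c where "c = (\<lambda>x. du3 x - of_real l * u1 x)"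
  have \<mu>: "\<mu> > 0" unfolding \<mu>_def using pos by simp
  have K0: "K0 \<ge> 0" unfolding K0_def by simp
  have aL2: "L2 L a" unfolding a_def
    by (intro L2_add L2_cmult has_weak_deriv_L2_deriv[OF u1] has_weak_deriv_L2[OF u2] has_weak_deriv_L2[OF u3])
  have cL2: "L2 L c" unfolding c_def
    by (intro L2_diff L2_cmult has_weak_deriv_L2_deriv[OF u3] has_weak_deriv_L2[OF u1])
  have du2: "L2 L du2" by (rule has_weak_deriv_L2_deriv[OF u2])
  note nn = sqnorm_nonneg[of L a] sqnorm_nonneg[of L du2] sqnorm_nonneg[of L c]
    sqnorm_nonneg[of L v1] sqnorm_nonneg[of L v2] sqnorm_nonneg[of L v3]
  have "\<mu> * (sqnorm L a + sqnorm L du2 + sqnorm L c + sqnorm L v1 + sqnorm L v2 + sqnorm L v3)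
      = \<mu> * sqnorm L a + \<mu> * sqnorm L v1 + \<mu> * sqnorm L du2 + \<mu> * sqnorm L v2
      + \<mu> * sqnorm L v3 + \<mu> * sqnorm L c"
    by (simp add: algebra_simps)
  also have "\<dots> \<le> \<kappa> * sqnorm L a + \<rho>1 * sqnorm L v1 + b * sqnorm L du2 + \<rho>2 * sqnorm L v2
      + \<rho>1 * sqnorm L v3 + k0 * sqnorm L c"
    unfolding \<mu>_def using nn by (intro add_mono mult_right_mono) auto
  also have "\<dots> = N^2"
    unfolding N_def Hnorm_def using aL2 cL2 du2 v1 v2 v3 pos nn
    by (simp add: L2sq_eq_sqnorm a_def c_def)
  finally have T: "sqnorm L a + sqnorm L du2 + sqnorm L c + sqnorm L v1 + sqnorm L v2 + sqnorm L v3 \<le> N^2 / \<mu>"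
    using \<mu> by (simp add: field_simps)
  have K: "K = K0 / \<mu> + 1 / \<mu>" unfolding K_def energy_const_def K0_def \<mu>_def by (simp add: add_divide_distrib)
  have N0: "0 \<le> N^2 / \<mu>" using \<mu> by simp
  have "sqnorm L du1 \<le> K0 * (sqnorm L a + sqnorm L du2 + sqnorm L c)"
       "sqnorm L du3 \<le> K0 * (sqnorm L a + sqnorm L du2 + sqnorm L c)"
    using sqnorm_derivs_le_energy[OF L u1 u2 u3 z1 z2 z3, of l] unfolding K0_def a_def c_def by auto
  moreover have "K0 * (sqnorm L a + sqnorm L du2 + sqnorm L c) \<le> K0 * (N^2 / \<mu>)"
    using T nn K0 by (intro mult_left_mono) auto
  moreover have "K0 * (N^2 / \<mu>) + N^2 / \<mu> = K * N^2" unfolding K by (simp add: algebra_simps)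
  ultimately show ?thesis using T nn K0 N0 by (smt (verit) mult_nonneg_nonneg)
qed

lemma integrable_bounded_mult_L2_mult:
  assumes h: "h \<in> borel_measurable (leb L)" and B: "\<And>x. x \<in> {0..L} \<Longrightarrow> norm (h x) \<le> B"
    and f: "L2 L f" and g: "L2 L g"
  shows "integrable (leb L) (\<lambda>x. h x * (f x * g x))"
  using integrable_L2_mult[OF L2_mult_bounded[OF f h B] g] by (simp add: mult.assoc)

section \<open>The multiplier identity\<close>

lemma Re_multiplier_pointwise:
  fixes q rho c m lam :: real and V dV dz ddz z G f :: complex
  assumes "\<i> * of_real lam * of_real rho * V - of_real c * ddz + G = of_real rho * f"
  shows "Re (2 * (of_real q * (G * cnj dz - of_real m * (dz * cnj z)))
       - of_real q * (of_real rho * (dV * cnj V + V * cnj dV) + of_real c * (ddz * cnj dz + dz * cnj ddz)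
                      - of_real m * (dz * cnj z + z * cnj dz)))
    = - 2 * rho * Re (of_real q * (dV * cnj V)) - 2 * rho * Re (of_real q * (\<i> * of_real lam * V * cnj dz))
      + 2 * rho * Re (of_real q * (f * cnj dz))"
proof -
  have "Re (\<i> * of_real lam * of_real rho * V - of_real c * ddz + G) = Re (of_real rho * f)"
       "Im (\<i> * of_real lam * of_real rho * V - of_real c * ddz + G) = Im (of_real rho * f)"
    using assms by simp_all
  then show ?thesis by simp algebra
qed

text \<open>This is where \<open>\<lambda>\<close> drops out: \<open>\<i>\<lambda>z = V + fz\<close>, so \<open>\<i>\<lambda>dz\<close> and \<open>dV + dfz\<close> are weak
  derivatives of the same function, and \<open>Re (q dV cnj V) = Re (q V cnj dV)\<close> since q is real.\<close>

lemma Re_integral_lambda_terms: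
  fixes q dq :: "real \<Rightarrow> real"
  assumes L: "L \<ge> 0" and q: "has_weak_deriv L (\<lambda>x. of_real (q x)) (\<lambda>x. of_real (dq x))"
    and z: "has_weak_deriv L z dz" and V: "has_weak_deriv L V dV" and fz: "has_weak_deriv L fz dfz"
    and rel: "\<forall>x\<in>{0..L}. \<i> * of_real lam * z x - V x = fz x"
  shows "Re (\<integral>x. of_real (q x) * (dV x * cnj (V x)) \<partial>leb L)
       + Re (\<integral>x. of_real (q x) * (\<i> * of_real lam * V x * cnj (dz x)) \<partial>leb L)
       = - Re (\<integral>x. of_real (q x) * (V x * cnj (dfz x)) \<partial>leb L)"
proof -
  define Q where "Q = (\<lambda>x. complex_of_real (q x))"
  define X where "X = (\<integral>x. Q x * (V x * cnj (dV x)) \<partial>leb L)"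
  define Y where "Y = (\<integral>x. Q x * (V x * cnj (dfz x)) \<partial>leb L)"
  have QV: "has_weak_deriv L (\<lambda>x. Q x * V x) (\<lambda>x. of_real (dq x) * V x + Q x * dV x)"
    unfolding Q_def by (rule has_weak_deriv_mult[OF q V])
  have "has_weak_deriv L (\<lambda>x. cnj (\<i> * of_real lam * z x)) (\<lambda>x. cnj (\<i> * of_real lam * dz x))"
    by (intro has_weak_deriv_cnj has_weak_deriv_cmult z)
  moreover have "has_weak_deriv L (\<lambda>x. cnj (\<i> * of_real lam * z x)) (\<lambda>x. cnj (dV x + dfz x))"
    using rel by (intro has_weak_deriv_cnj has_weak_deriv_cong[OF has_weak_deriv_add[OF V fz] L])
      (auto simp: algebra_simps)
  ultimately have lam: "(\<integral>x. Q x * V x * cnj (\<i> * of_real lam * dz x) \<partial>leb L)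
      = (\<integral>x. Q x * V x * cnj (dV x + dfz x) \<partial>leb L)"
    using QV L by (rule has_weak_deriv_integral_eq)
  have QV2: "L2 L (\<lambda>x. Q x * V x)" by (rule has_weak_deriv_L2[OF QV])
  have "(\<integral>x. Q x * V x * cnj (dV x + dfz x) \<partial>leb L) = X + Y"
    unfolding X_def Y_def
    using integrable_L2_mult[OF QV2 L2_cnj[OF has_weak_deriv_L2_deriv[OF V]]]
      integrable_L2_mult[OF QV2 L2_cnj[OF has_weak_deriv_L2_deriv[OF fz]]]
    by (simp add: algebra_simps)
  moreover have "(\<lambda>x. Q x * (\<i> * of_real lam * V x * cnj (dz x))) = (\<lambda>x. - (Q x * V x * cnj (\<i> * of_real lam * dz x)))"
    by (auto simp: algebra_simps)
  ultimately have "(\<integral>x. Q x * (\<i> * of_real lam * V x * cnj (dz x)) \<partial>leb L) = - (X + Y)"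
    using lam by (simp only: Bochner_Integration.integral_minus)
  moreover have "(\<lambda>x. Q x * (dV x * cnj (V x))) = (\<lambda>x. cnj (Q x * (V x * cnj (dV x))))"
    unfolding Q_def by auto
  then have "(\<integral>x. Q x * (dV x * cnj (V x)) \<partial>leb L) = cnj X"
    unfolding X_def by (simp only: Bochner_Integration.integral_cnj)
  ultimately show ?thesis by (simp add: Q_def Y_def)
qed

lemma integral_Re_leb:
  "integrable (leb L) f \<Longrightarrow> integral {0..L} (\<lambda>x. Re (f x)) = Re (\<integral>x. f x \<partial>leb L)"
  by (simp add: lebesgue_integral_eq_integral_leb)

lemma integral_energy_by_parts:
  fixes rho c m L :: real and q dq :: "real \<Rightarrow> real" and z dz ddz V dV :: "real \<Rightarrow> complex"
  assumes L: "L \<ge> 0" and q: "has_weak_deriv L (\<lambda>x. of_real (q x)) (\<lambda>x. of_real (dq x))"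
    and z: "has_weak_deriv L z dz" and dz: "has_weak_deriv L dz ddz" and V: "has_weak_deriv L V dV"
  defines "E' \<equiv> \<lambda>x. of_real rho * (dV x * cnj (V x) + V x * cnj (dV x))
    + of_real c * (ddz x * cnj (dz x) + dz x * cnj (ddz x)) - of_real m * (dz x * cnj (z x) + z x * cnj (dz x))"
  shows "integral {0..L} (\<lambda>x. dq x * dens rho c V dz x) - m * integral {0..L} (\<lambda>x. dq x * (cmod (z x))^2)
    = bracket L (\<lambda>x. q x * dens rho c V dz x) - bracket L (\<lambda>x. m * q x * (cmod (z x))^2)
      - (\<integral>x. Re (of_real (q x) * E' x) \<partial>leb L)"
proof -
  define Q where "Q = (\<lambda>x. complex_of_real (q x))"
  define dQ where "dQ = (\<lambda>x. complex_of_real (dq x))"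
  define E where "E = (\<lambda>x. of_real rho * (V x * cnj (V x)) + of_real c * (dz x * cnj (dz x))
    - of_real m * (z x * cnj (z x)))"
  have Qw: "has_weak_deriv L Q dQ" unfolding Q_def dQ_def by (rule q)
  have Ew: "has_weak_deriv L E E'" unfolding E_def E'_def
    by (intro has_weak_deriv_diff has_weak_deriv_add has_weak_deriv_cmult has_weak_deriv_mult
        has_weak_deriv_cnj V z dz)
  have zz: "L2 L (\<lambda>x. z x * cnj (z x))"
    by (rule has_weak_deriv_L2[OF has_weak_deriv_mult[OF z has_weak_deriv_cnj[OF z]]])
  have idQE: "integrable (leb L) (\<lambda>x. dQ x * E x)" and idQzz: "integrable (leb L) (\<lambda>x. dQ x * (z x * cnj (z x)))"
    and iQE': "integrable (leb L) (\<lambda>x. Q x * E' x)"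
    using integrable_L2_mult[OF has_weak_deriv_L2_deriv[OF Qw] has_weak_deriv_L2[OF Ew]]
      integrable_L2_mult[OF has_weak_deriv_L2_deriv[OF Qw] zz]
      integrable_L2_mult[OF has_weak_deriv_L2[OF Qw] has_weak_deriv_L2_deriv[OF Ew]] .
  have "integral {0..L} (\<lambda>x. dq x * dens rho c V dz x) - m * integral {0..L} (\<lambda>x. dq x * (cmod (z x))^2)
      = Re (\<integral>x. dQ x * E x \<partial>leb L)"
  proof -
    have e: "(\<lambda>x. dq x * dens rho c V dz x) = (\<lambda>x. Re (dQ x * E x + of_real m * (dQ x * (z x * cnj (z x)))))"
      "(\<lambda>x. dq x * (cmod (z x))^2) = (\<lambda>x. Re (dQ x * (z x * cnj (z x))))"
      unfolding dQ_def E_def dens_def by (auto simp: Re_mult_cnj[symmetric] algebra_simps)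
    have i: "integrable (leb L) (\<lambda>x. dQ x * E x + of_real m * (dQ x * (z x * cnj (z x))))"
      using idQE idQzz by simp
    show ?thesis unfolding e integral_Re_leb[OF i] integral_Re_leb[OF idQzz] using idQE idQzz by simp
  qed
  also have "\<dots> = Re (Q L * E L - Q 0 * E 0) - (\<integral>x. Re (Q x * E' x) \<partial>leb L)"
    unfolding integral_Re[OF iQE'] integration_by_parts[OF Qw Ew L] by simp
  also have "Re (Q L * E L - Q 0 * E 0)
      = bracket L (\<lambda>x. q x * dens rho c V dz x) - bracket L (\<lambda>x. m * q x * (cmod (z x))^2)"
    unfolding bracket_def Q_def E_def dens_def by (simp add: Re_mult_cnj[symmetric] algebra_simps)
  finally show ?thesis unfolding Q_def .
qed

lemma integral_energy_flux_eq:
  fixes lam rho c m L :: real and q dq :: "real \<Rightarrow> real"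
    and z dz ddz V dV fz dfz f G :: "real \<Rightarrow> complex"
  assumes L: "L \<ge> 0"
    and q: "has_weak_deriv L (\<lambda>x. of_real (q x)) (\<lambda>x. of_real (dq x))"
    and z: "has_weak_deriv L z dz" and dz: "has_weak_deriv L dz ddz" and V: "has_weak_deriv L V dV"
    and fz: "has_weak_deriv L fz dfz" and rel: "\<forall>x\<in>{0..L}. \<i> * of_real lam * z x - V x = fz x"
    and f: "L2 L f" and G: "L2 L G"
    and eq: "AE x in leb L. \<i> * of_real lam * of_real rho * V x - of_real c * ddz x + G x = of_real rho * f x"
  defines "E' \<equiv> \<lambda>x. of_real rho * (dV x * cnj (V x) + V x * cnj (dV x))
    + of_real c * (ddz x * cnj (dz x) + dz x * cnj (ddz x)) - of_real m * (dz x * cnj (z x) + z x * cnj (dz x))"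
  shows "2 * Re (integral {0..L} (\<lambda>x. of_real (q x) * (G x * cnj (dz x) - of_real m * (dz x * cnj (z x)))))
      - (\<integral>x. Re (of_real (q x) * E' x) \<partial>leb L)
    = 2 * rho * Re (integral {0..L} (\<lambda>x. of_real (q x) * (V x * cnj (dfz x) + f x * cnj (dz x))))"
proof -
  define Q where "Q = (\<lambda>x. complex_of_real (q x))"
  define A where "A = (\<lambda>x. Q x * (G x * cnj (dz x) - of_real m * (dz x * cnj (z x))))"
  define b1 where "b1 = (\<lambda>x. Q x * (dV x * cnj (V x)))"
  define b2 where "b2 = (\<lambda>x. Q x * (\<i> * of_real lam * V x * cnj (dz x)))"
  define b3 where "b3 = (\<lambda>x. Q x * (f x * cnj (dz x)))"
  define b4 where "b4 = (\<lambda>x. Q x * (V x * cnj (dfz x)))"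
  have Qw: "has_weak_deriv L Q (\<lambda>x. of_real (dq x))" unfolding Q_def by (rule q)
  obtain B where Qb: "\<And>x. x \<in> {0..L} \<Longrightarrow> norm (Q x) \<le> B"
    using norm_le_weak_deriv_bound[OF Qw] by blast
  have iQ: "integrable (leb L) (\<lambda>x. Q x * (g x * h x))" if "L2 L g" "L2 L h" for g h
    by (rule integrable_bounded_mult_L2_mult[OF has_weak_deriv_measurable[OF Qw] _ that]) (rule Qb)
  note L2s = has_weak_deriv_L2[OF V] has_weak_deriv_L2_deriv[OF V] has_weak_deriv_L2[OF z]
    has_weak_deriv_L2[OF dz] has_weak_deriv_L2_deriv[OF fz]
  have "b2 = (\<lambda>x. (\<i> * of_real lam) * (Q x * (V x * cnj (dz x))))"
    and "A = (\<lambda>x. Q x * (G x * cnj (dz x)) - of_real m * (Q x * (dz x * cnj (z x))))"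
    unfolding A_def b2_def by (auto simp: algebra_simps)
  then have ib: "integrable (leb L) b1" "integrable (leb L) b2" "integrable (leb L) b3" "integrable (leb L) b4"
    and iA: "integrable (leb L) A"
    using iQ[OF L2s(2) L2_cnj[OF L2s(1)]] iQ[OF L2s(1) L2_cnj[OF L2s(4)]] iQ[OF f L2_cnj[OF L2s(4)]]
      iQ[OF L2s(1) L2_cnj[OF L2s(5)]] iQ[OF G L2_cnj[OF L2s(4)]] iQ[OF L2s(4) L2_cnj[OF L2s(3)]]
    unfolding b1_def b3_def b4_def by simp_all
  have "has_weak_deriv L (\<lambda>x. of_real rho * (V x * cnj (V x)) + of_real c * (dz x * cnj (dz x))
    - of_real m * (z x * cnj (z x))) E'"
    unfolding E'_def by (intro has_weak_deriv_diff has_weak_deriv_add has_weak_deriv_cmult has_weak_deriv_mult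
        has_weak_deriv_cnj V z dz)
  then have iQE': "integrable (leb L) (\<lambda>x. Q x * E' x)"
    by (intro integrable_L2_mult has_weak_deriv_L2[OF Qw] has_weak_deriv_L2_deriv)
  have "(\<integral>x. Re (2 * A x - Q x * E' x) \<partial>leb L) = 2 * Re (\<integral>x. A x \<partial>leb L) - Re (\<integral>x. Q x * E' x \<partial>leb L)"
  proof -
    have "integrable (leb L) (\<lambda>x. 2 * A x - Q x * E' x)" using iA iQE' by simp
    then show ?thesis using iA iQE' by (simp only: integral_Re) simp
  qed
  moreover have "integral {0..L} (\<lambda>x. of_real (q x) * (G x * cnj (dz x) - of_real m * (dz x * cnj (z x))))
      = (\<integral>x. A x \<partial>leb L)"
    unfolding A_def Q_def using iA[unfolded A_def Q_def] by (rule lebesgue_integral_eq_integral_leb)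
  moreover have "(\<integral>x. Re (of_real (q x) * E' x) \<partial>leb L) = Re (\<integral>x. Q x * E' x \<partial>leb L)"
    unfolding Q_def using iQE'[unfolded Q_def] by (rule integral_Re)
  ultimately have "2 * Re (integral {0..L} (\<lambda>x. of_real (q x) * (G x * cnj (dz x) - of_real m * (dz x * cnj (z x)))))
      - (\<integral>x. Re (of_real (q x) * E' x) \<partial>leb L) = (\<integral>x. Re (2 * A x - Q x * E' x) \<partial>leb L)"
    by (simp only:)
  also have "\<dots> = (\<integral>x. - 2 * rho * Re (b1 x) - 2 * rho * Re (b2 x) + 2 * rho * Re (b3 x) \<partial>leb L)"
  proof (rule integral_cong_AE)
    show "AE x in leb L. Re (2 * A x - Q x * E' x) = - 2 * rho * Re (b1 x) - 2 * rho * Re (b2 x) + 2 * rho * Re (b3 x)"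
      using eq by eventually_elim (unfold A_def E'_def Q_def b1_def b2_def b3_def, rule Re_multiplier_pointwise)
    show "(\<lambda>x. Re (2 * A x - Q x * E' x)) \<in> borel_measurable (leb L)"
      using iA iQE' by (intro borel_measurable_integrable integrable_Re) simp
  qed (intro borel_measurable_integrable Bochner_Integration.integrable_add Bochner_Integration.integrable_diff
      integrable_mult_right integrable_Re ib)+
  also have "\<dots> = - 2 * rho * (Re (\<integral>x. b1 x \<partial>leb L) + Re (\<integral>x. b2 x \<partial>leb L)) + 2 * rho * Re (\<integral>x. b3 x \<partial>leb L)"
    using integrable_Re[OF ib(1)] integrable_Re[OF ib(2)] integrable_Re[OF ib(3)]
    by (simp add: integral_Re[OF ib(1), symmetric] integral_Re[OF ib(2), symmetric]
        integral_Re[OF ib(3), symmetric] algebra_simps)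
  also have "Re (\<integral>x. b1 x \<partial>leb L) + Re (\<integral>x. b2 x \<partial>leb L) = - Re (\<integral>x. b4 x \<partial>leb L)"
    unfolding b1_def b2_def b4_def Q_def by (rule Re_integral_lambda_terms[OF L q z V fz rel])
  also have "- 2 * rho * - Re (\<integral>x. b4 x \<partial>leb L) + 2 * rho * Re (\<integral>x. b3 x \<partial>leb L)
      = 2 * rho * Re (integral {0..L} (\<lambda>x. of_real (q x) * (V x * cnj (dfz x) + f x * cnj (dz x))))"
    using ib(3,4) by (simp add: lebesgue_integral_eq_integral_leb b3_def b4_def Q_def algebra_simps)
  finally show ?thesis .
qed

text \<open>The multiplier identity for one equation \<open>\<i>\<lambda>\<rho>V - c z'' + G = \<rho>f\<close> with \<open>\<i>\<lambda>z - V = fz\<close>: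
  multiply by \<open>2 q cnj z'\<close>, take real parts and integrate by parts.\<close>

lemma multiplier_identity:
  fixes lam rho c m L :: real and q dq :: "real \<Rightarrow> real"
    and z dz ddz V dV fz dfz f G :: "real \<Rightarrow> complex"
  assumes L: "L \<ge> 0"
    and q: "has_weak_deriv L (\<lambda>x. of_real (q x)) (\<lambda>x. of_real (dq x))"
    and z: "has_weak_deriv L z dz" and dz: "has_weak_deriv L dz ddz" and V: "has_weak_deriv L V dV"
    and fz: "has_weak_deriv L fz dfz" and rel: "\<forall>x\<in>{0..L}. \<i> * of_real lam * z x - V x = fz x"
    and f: "L2 L f" and G: "L2 L G"
    and eq: "AE x in leb L. \<i> * of_real lam * of_real rho * V x - of_real c * ddz x + G x = of_real rho * f x"
  shows "integral {0..L} (\<lambda>x. dq x * dens rho c V dz x)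
     - (bracket L (\<lambda>x. q x * dens rho c V dz x) - bracket L (\<lambda>x. m * q x * (cmod (z x))^2)
        + m * integral {0..L} (\<lambda>x. dq x * (cmod (z x))^2)
        - 2 * Re (integral {0..L} (\<lambda>x. of_real (q x) * (G x * cnj (dz x) - of_real m * (dz x * cnj (z x))))))
     = 2 * rho * Re (integral {0..L} (\<lambda>x. of_real (q x) * (V x * cnj (dfz x) + f x * cnj (dz x))))"
  using integral_energy_by_parts[OF L q z dz V, of rho c m]
    integral_energy_flux_eq[OF L q z dz V fz rel f G eq, of m]
  by argo

lemma norm_integral_bounded_mult_le:
  assumes h: "h \<in> borel_measurable (leb L)" and hb: "\<And>x. x \<in> {0..L} \<Longrightarrow> norm (h x) \<le> B" and B: "0 \<le> B"
    and f: "L2 L f" and g: "L2 L g"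
  shows "norm (\<integral>x. h x * f x * g x \<partial>leb L) \<le> B * sqrt (sqnorm L f) * sqrt (sqnorm L g)"
proof -
  have "norm (\<integral>x. h x * f x * g x \<partial>leb L) \<le> sqrt (sqnorm L (\<lambda>x. h x * f x)) * sqrt (sqnorm L g)"
    by (rule Cauchy_Schwarz_integral[OF L2_mult_bounded[OF f h hb] g])
  also have "sqrt (sqnorm L (\<lambda>x. h x * f x)) \<le> B * sqrt (sqnorm L f)"
    using real_sqrt_le_mono[OF sqnorm_mult_bounded_le[OF f h hb]] B by (simp add: real_sqrt_mult)
  then have "sqrt (sqnorm L (\<lambda>x. h x * f x)) * sqrt (sqnorm L g) \<le> B * sqrt (sqnorm L f) * sqrt (sqnorm L g)"
    by (rule mult_right_mono) (simp add: sqnorm_nonneg)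
  finally show ?thesis .
qed

lemma sqrt_le_of_le_mult_sq: "x \<le> K * N^2 \<Longrightarrow> 0 \<le> K \<Longrightarrow> 0 \<le> N \<Longrightarrow> sqrt x \<le> sqrt K * N"
  using real_sqrt_le_mono[of x "K * N^2"] by (simp add: real_sqrt_mult)

lemma remainder_le:
  fixes q :: "real \<Rightarrow> real"
  assumes Q: "(\<lambda>x. complex_of_real (q x)) \<in> borel_measurable (leb L)"
    and Qb: "\<And>x. x \<in> {0..L} \<Longrightarrow> norm (complex_of_real (q x)) \<le> B" and B: "0 \<le> B"
    and V: "L2 L V" and dfz: "L2 L dfz" and f: "L2 L f" and dz: "L2 L dz"
    and nU: "sqnorm L V \<le> K * NU^2" "sqnorm L dz \<le> K * NU^2"
    and nF: "sqnorm L dfz \<le> K * NF^2" "sqnorm L f \<le> K * NF^2"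
    and C: "4 * rho * B * K \<le> C" and nn: "0 \<le> rho" "0 \<le> K" "0 \<le> NU" "0 \<le> NF"
  shows "\<bar>2 * rho * Re (integral {0..L} (\<lambda>x. of_real (q x) * (V x * cnj (dfz x) + f x * cnj (dz x))))\<bar>
    \<le> C * NU * NF"
proof -
  have i1: "integrable (leb L) (\<lambda>x. of_real (q x) * V x * cnj (dfz x))"
    and i2: "integrable (leb L) (\<lambda>x. of_real (q x) * f x * cnj (dz x))"
    using integrable_L2_mult[OF L2_mult_bounded[OF V Q Qb] L2_cnj[OF dfz]]
      integrable_L2_mult[OF L2_mult_bounded[OF f Q Qb] L2_cnj[OF dz]] by auto
  have I: "integral {0..L} (\<lambda>x. of_real (q x) * (V x * cnj (dfz x) + f x * cnj (dz x)))
      = (\<integral>x. of_real (q x) * V x * cnj (dfz x) \<partial>leb L) + (\<integral>x. of_real (q x) * f x * cnj (dz x) \<partial>leb L)"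
    (is "?I = _") using i1 i2 by (simp add: lebesgue_integral_eq_integral_leb algebra_simps)
  have "\<bar>Re ?I\<bar> \<le> norm ((\<integral>x. of_real (q x) * V x * cnj (dfz x) \<partial>leb L) + (\<integral>x. of_real (q x) * f x * cnj (dz x) \<partial>leb L))"
    unfolding I by (rule abs_Re_le_cmod)
  also have "\<dots> \<le> norm (\<integral>x. of_real (q x) * V x * cnj (dfz x) \<partial>leb L) + norm (\<integral>x. of_real (q x) * f x * cnj (dz x) \<partial>leb L)"
    by (rule norm_triangle_ineq)
  also have "\<dots> \<le> B * sqrt (sqnorm L V) * sqrt (sqnorm L dfz) + B * sqrt (sqnorm L f) * sqrt (sqnorm L dz)"
    using norm_integral_bounded_mult_le[OF Q Qb B V L2_cnj[OF dfz]] norm_integral_bounded_mult_le[OF Q Qb B f L2_cnj[OF dz]]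
    by (simp add: add_mono)
  also have "\<dots> \<le> B * (sqrt K * NU) * (sqrt K * NF) + B * (sqrt K * NF) * (sqrt K * NU)"
    using nU nF nn B
    by (intro add_mono mult_mono mult_left_mono sqrt_le_of_le_mult_sq) (auto simp: sqnorm_nonneg)
  also have "\<dots> = 2 * B * K * NU * NF" using nn by (simp add: algebra_simps)
  finally have "\<bar>Re ?I\<bar> \<le> 2 * B * K * NU * NF" .
  then have "2 * rho * \<bar>Re ?I\<bar> \<le> 2 * rho * (2 * B * K * NU * NF)"
    using nn by (intro mult_left_mono) auto
  then have "\<bar>2 * rho * Re ?I\<bar> \<le> (4 * rho * B * K) * NU * NF"
    using nn by (simp add: abs_mult algebra_simps)
  also have "\<dots> \<le> C * NU * NF" using C nn by (intro mult_right_mono) auto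
  finally show ?thesis .
qed

lemma Re_integral_eq_lincomb:
  fixes g1 g2 g3 :: "real \<Rightarrow> complex"
  assumes i: "integrable (leb L) g1" "integrable (leb L) g2" "integrable (leb L) g3"
    and Re: "\<And>x. Re (g3 x) = \<alpha> * Re (g1 x) + \<beta> * Re (g2 x)"
  shows "Re (integral {0..L} g3) = \<alpha> * Re (integral {0..L} g1) + \<beta> * Re (integral {0..L} g2)"
proof -
  have "Re (integral {0..L} g3) = (\<integral>x. \<alpha> * Re (g1 x) + \<beta> * Re (g2 x) \<partial>leb L)"
    unfolding Re[symmetric] using i(3) by (simp add: lebesgue_integral_eq_integral_leb)
  also have "\<dots> = \<alpha> * Re (integral {0..L} g1) + \<beta> * Re (integral {0..L} g2)"
    using i(1,2) by (simp add: lebesgue_integral_eq_integral_leb)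
  finally show ?thesis .
qed

section \<open>Solutions of the resolvent equation\<close>

locale bresse_resolvent =
  fixes L \<rho>\<^sub>1 \<rho>\<^sub>2 \<kappa> b k\<^sub>0 l lam :: real and q dq :: "real \<Rightarrow> real"
    and \<phi> \<phi>x \<phi>xx \<psi> \<psi>x \<psi>xx w wx wxx \<Phi> \<Phi>x \<Psi> \<Psi>x W Wx f1 f1x f2 f2x f3 f3x f4 f5 f6 :: "real \<Rightarrow> complex"
  assumes pos: "L > 0" "\<rho>\<^sub>1 > 0" "\<rho>\<^sub>2 > 0" "\<kappa> > 0" "b > 0" "k\<^sub>0 > 0"
    and q: "H1 L q dq"
    and \<phi>: "H2 L \<phi> \<phi>x \<phi>xx" "\<phi> L = 0" and \<psi>: "H2 L \<psi> \<psi>x \<psi>xx" "\<psi> L = 0"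
    and w: "H2 L w wx wxx" "w L = 0"
    and \<Phi>: "H1L L \<Phi> \<Phi>x" and \<Psi>: "H1L L \<Psi> \<Psi>x" and W: "H1L L W Wx"
    and f1: "H1L L f1 f1x" and f2: "H1L L f2 f2x" and f3: "H1L L f3 f3x"
    and f4: "sqint L f4" and f5: "sqint L f5" and f6: "sqint L f6"
    and eq1: "\<forall>x\<in>{0..L}. \<i> * of_real lam * \<phi> x - \<Phi> x = f1 x"
    and eq2: "\<forall>x\<in>{0..L}. \<i> * of_real lam * \<psi> x - \<Psi> x = f2 x"
    and eq3: "\<forall>x\<in>{0..L}. \<i> * of_real lam * w x - W x = f3 x"
    and eq4: "AE x in leb L. \<i> * of_real lam * of_real \<rho>\<^sub>1 * \<Phi> x
         - of_real \<kappa> * (\<phi>xx x + \<psi>x x + of_real l * wx x)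
         - of_real k\<^sub>0 * of_real l * (wx x - of_real l * \<phi> x) = of_real \<rho>\<^sub>1 * f4 x"
    and eq5: "AE x in leb L. \<i> * of_real lam * of_real \<rho>\<^sub>2 * \<Psi> x - of_real b * \<psi>xx x
         + of_real \<kappa> * (\<phi>x x + \<psi> x + of_real l * w x) = of_real \<rho>\<^sub>2 * f5 x"
    and eq6: "AE x in leb L. \<i> * of_real lam * of_real \<rho>\<^sub>1 * W x
         - of_real k\<^sub>0 * (wxx x - of_real l * \<phi>x x)
         + of_real \<kappa> * of_real l * (\<phi>x x + \<psi> x + of_real l * w x) = of_real \<rho>\<^sub>1 * f6 x"
begin

abbreviation "NU \<equiv> Hnorm L \<kappa> \<rho>\<^sub>1 b \<rho>\<^sub>2 k\<^sub>0 l \<phi> \<phi>x \<psi> \<psi>x w wx \<Phi> \<Psi> W"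
abbreviation "NF \<equiv> Hnorm L \<kappa> \<rho>\<^sub>1 b \<rho>\<^sub>2 k\<^sub>0 l f1 f1x f2 f2x f3 f3x f4 f5 f6"

lemma weak_derivs:
  "has_weak_deriv L \<phi> \<phi>x" "has_weak_deriv L \<phi>x \<phi>xx" "has_weak_deriv L \<psi> \<psi>x" "has_weak_deriv L \<psi>x \<psi>xx"
  "has_weak_deriv L w wx" "has_weak_deriv L wx wxx"
  "has_weak_deriv L \<Phi> \<Phi>x" "has_weak_deriv L \<Psi> \<Psi>x" "has_weak_deriv L W Wx"
  "has_weak_deriv L f1 f1x" "has_weak_deriv L f2 f2x" "has_weak_deriv L f3 f3x"
  using \<phi> \<psi> w \<Phi> \<Psi> W f1 f2 f3 unfolding H2_def H1L_def by (auto intro: H1_imp_has_weak_deriv)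

lemma L2_components:
  "L2 L \<phi>" "L2 L \<phi>x" "L2 L \<psi>" "L2 L \<psi>x" "L2 L w" "L2 L wx" "L2 L \<Phi>" "L2 L \<Psi>" "L2 L W"
  "L2 L f1x" "L2 L f2x" "L2 L f3x" "L2 L f4" "L2 L f5" "L2 L f6"
  using weak_derivs f4 f5 f6 by (auto intro: has_weak_deriv_L2 has_weak_deriv_L2_deriv sqint_imp_L2)

lemma q_weak_deriv: "has_weak_deriv L (\<lambda>x. of_real (q x)) (\<lambda>x. of_real (dq x))"
  by (rule H1_real_imp_has_weak_deriv[OF q])

lemma q_bound: "x \<in> {0..L} \<Longrightarrow> norm (complex_of_real (q x)) \<le> \<bar>q 0\<bar> + (\<integral>t. \<bar>dq t\<bar> \<partial>leb L)"
  using norm_le_weak_deriv_bound[OF q_weak_deriv] by simp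

lemma integrable_q_mult:
  "L2 L g \<Longrightarrow> L2 L h \<Longrightarrow> integrable (leb L) (\<lambda>x. of_real (q x) * g x * h x)"
  using integrable_L2_mult[OF L2_mult_bounded[OF _ has_weak_deriv_measurable[OF q_weak_deriv] q_bound]]
  by auto

lemma integrable_q_mult_diff:
  assumes "L2 L g1" "L2 L h1" "L2 L g2" "L2 L h2"
  shows "integrable (leb L) (\<lambda>x. of_real (q x) * (g1 x * h1 x - c * (g2 x * h2 x)))"
proof -
  have "(\<lambda>x. of_real (q x) * (g1 x * h1 x - c * (g2 x * h2 x)))
      = (\<lambda>x. of_real (q x) * g1 x * h1 x - c * (of_real (q x) * g2 x * h2 x))"
    by (auto simp: algebra_simps)
  then show ?thesis using integrable_q_mult[OF assms(1,2)] integrable_q_mult[OF assms(3,4)] by simp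
qed

lemma phi_identity:
  "integral {0..L} (\<lambda>x. dq x * dens \<rho>\<^sub>1 \<kappa> \<Phi> \<phi>x x)
     - (bracket L (\<lambda>x. q x * dens \<rho>\<^sub>1 \<kappa> \<Phi> \<phi>x x)
        - bracket L (\<lambda>x. k\<^sub>0 * l^2 * q x * (cmod (\<phi> x))^2)
        + 2 * \<kappa> * Re (integral {0..L} (\<lambda>x. of_real (q x) * \<psi>x x * cnj (\<phi>x x)))
        + k\<^sub>0 * l^2 * integral {0..L} (\<lambda>x. dq x * (cmod (\<phi> x))^2)
        + 2 * (\<kappa> + k\<^sub>0) * l * Re (integral {0..L} (\<lambda>x. of_real (q x) * wx x * cnj (\<phi>x x))))
   = 2 * \<rho>\<^sub>1 * Re (integral {0..L} (\<lambda>x. of_real (q x) * (\<Phi> x * cnj (f1x x) + f4 x * cnj (\<phi>x x))))"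
proof -
  define G where "G = (\<lambda>x. - of_real \<kappa> * (\<psi>x x + of_real l * wx x) - of_real k\<^sub>0 * of_real l * (wx x - of_real l * \<phi> x))"
  have G: "L2 L G" unfolding G_def by (intro L2_diff L2_cmult L2_add L2_components)
  have eq: "AE x in leb L. \<i> * of_real lam * of_real \<rho>\<^sub>1 * \<Phi> x - of_real \<kappa> * \<phi>xx x + G x = of_real \<rho>\<^sub>1 * f4 x"
    using eq4 by eventually_elim (simp add: G_def algebra_simps)
  have "Re (integral {0..L} (\<lambda>x. of_real (q x) * (G x * cnj (\<phi>x x) - of_real (k\<^sub>0 * l^2) * (\<phi>x x * cnj (\<phi> x)))))
      = - \<kappa> * Re (integral {0..L} (\<lambda>x. of_real (q x) * \<psi>x x * cnj (\<phi>x x)))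
        + - ((\<kappa> + k\<^sub>0) * l) * Re (integral {0..L} (\<lambda>x. of_real (q x) * wx x * cnj (\<phi>x x)))"
  proof (rule Re_integral_eq_lincomb)
    show "integrable (leb L) (\<lambda>x. of_real (q x) * (G x * cnj (\<phi>x x) - of_real (k\<^sub>0 * l^2) * (\<phi>x x * cnj (\<phi> x))))"
      by (intro integrable_q_mult_diff G L2_cnj L2_components)
  qed (intro integrable_q_mult L2_cnj L2_components | simp add: G_def algebra_simps power2_eq_square)+
  then show ?thesis
    using multiplier_identity[OF less_imp_le[OF pos(1)] q_weak_deriv weak_derivs(1,2,7,10) eq1 L2_components(13) G eq, of "k\<^sub>0 * l^2"]
    by (simp add: algebra_simps)
qed

lemma psi_identity:
  "integral {0..L} (\<lambda>x. dq x * dens \<rho>\<^sub>2 b \<Psi> \<psi>x x)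
     - (bracket L (\<lambda>x. q x * dens \<rho>\<^sub>2 b \<Psi> \<psi>x x)
        - bracket L (\<lambda>x. \<kappa> * q x * (cmod (\<psi> x))^2)
        - 2 * \<kappa> * Re (integral {0..L} (\<lambda>x. of_real (q x) * \<phi>x x * cnj (\<psi>x x)))
        + \<kappa> * integral {0..L} (\<lambda>x. dq x * (cmod (\<psi> x))^2)
        - 2 * \<kappa> * l * Re (integral {0..L} (\<lambda>x. of_real (q x) * w x * cnj (\<psi>x x))))
   = 2 * \<rho>\<^sub>2 * Re (integral {0..L} (\<lambda>x. of_real (q x) * (\<Psi> x * cnj (f2x x) + f5 x * cnj (\<psi>x x))))"
proof -
  define G where "G = (\<lambda>x. of_real \<kappa> * (\<phi>x x + \<psi> x + of_real l * w x))"
  have G: "L2 L G" unfolding G_def by (intro L2_cmult L2_add L2_components)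
  have eq: "AE x in leb L. \<i> * of_real lam * of_real \<rho>\<^sub>2 * \<Psi> x - of_real b * \<psi>xx x + G x = of_real \<rho>\<^sub>2 * f5 x"
    using eq5 by eventually_elim (simp add: G_def algebra_simps)
  have "Re (integral {0..L} (\<lambda>x. of_real (q x) * (G x * cnj (\<psi>x x) - of_real \<kappa> * (\<psi>x x * cnj (\<psi> x)))))
      = \<kappa> * Re (integral {0..L} (\<lambda>x. of_real (q x) * \<phi>x x * cnj (\<psi>x x)))
        + \<kappa> * l * Re (integral {0..L} (\<lambda>x. of_real (q x) * w x * cnj (\<psi>x x)))"
  proof (rule Re_integral_eq_lincomb)
    show "integrable (leb L) (\<lambda>x. of_real (q x) * (G x * cnj (\<psi>x x) - of_real \<kappa> * (\<psi>x x * cnj (\<psi> x))))"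
      by (intro integrable_q_mult_diff G L2_cnj L2_components)
  qed (intro integrable_q_mult L2_cnj L2_components | simp add: G_def algebra_simps)+
  then show ?thesis
    using multiplier_identity[OF less_imp_le[OF pos(1)] q_weak_deriv weak_derivs(3,4,8,11) eq2 L2_components(14) G eq, of \<kappa>]
    by (simp add: algebra_simps)
qed

lemma w_identity:
  "integral {0..L} (\<lambda>x. dq x * dens \<rho>\<^sub>1 k\<^sub>0 W wx x)
     - (bracket L (\<lambda>x. q x * dens \<rho>\<^sub>1 k\<^sub>0 W wx x)
        - bracket L (\<lambda>x. \<kappa> * l^2 * q x * (cmod (w x))^2)
        - 2 * \<kappa> * l * Re (integral {0..L} (\<lambda>x. of_real (q x) * \<psi> x * cnj (wx x)))
        - 2 * (\<kappa> + k\<^sub>0) * l * Re (integral {0..L} (\<lambda>x. of_real (q x) * \<phi>x x * cnj (wx x)))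
        + \<kappa> * l^2 * integral {0..L} (\<lambda>x. dq x * (cmod (w x))^2))
   = 2 * \<rho>\<^sub>1 * Re (integral {0..L} (\<lambda>x. of_real (q x) * (W x * cnj (f3x x) + f6 x * cnj (wx x))))"
proof -
  define G where "G = (\<lambda>x. of_real k\<^sub>0 * of_real l * \<phi>x x + of_real \<kappa> * of_real l * (\<phi>x x + \<psi> x + of_real l * w x))"
  have G: "L2 L G" unfolding G_def by (intro L2_cmult L2_add L2_components)
  have eq: "AE x in leb L. \<i> * of_real lam * of_real \<rho>\<^sub>1 * W x - of_real k\<^sub>0 * wxx x + G x = of_real \<rho>\<^sub>1 * f6 x"
    using eq6 by eventually_elim (simp add: G_def algebra_simps)
  have "Re (integral {0..L} (\<lambda>x. of_real (q x) * (G x * cnj (wx x) - of_real (\<kappa> * l^2) * (wx x * cnj (w x)))))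
      = \<kappa> * l * Re (integral {0..L} (\<lambda>x. of_real (q x) * \<psi> x * cnj (wx x)))
        + (\<kappa> + k\<^sub>0) * l * Re (integral {0..L} (\<lambda>x. of_real (q x) * \<phi>x x * cnj (wx x)))"
  proof (rule Re_integral_eq_lincomb)
    show "integrable (leb L) (\<lambda>x. of_real (q x) * (G x * cnj (wx x) - of_real (\<kappa> * l^2) * (wx x * cnj (w x))))"
      by (intro integrable_q_mult_diff G L2_cnj L2_components)
  qed (intro integrable_q_mult L2_cnj L2_components | simp add: G_def algebra_simps power2_eq_square)+
  then show ?thesis
    using multiplier_identity[OF less_imp_le[OF pos(1)] q_weak_deriv weak_derivs(5,6,9,12) eq3 L2_components(15) G eq, of "\<kappa> * l^2"]
    by (simp add: algebra_simps)
qed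

lemma remainder_bounds:
  assumes "4 * (\<rho>\<^sub>1 + \<rho>\<^sub>2) * (\<bar>q 0\<bar> + (\<integral>t. \<bar>dq t\<bar> \<partial>leb L)) * energy_const L \<kappa> \<rho>\<^sub>1 b \<rho>\<^sub>2 k\<^sub>0 l \<le> C"
  shows "\<bar>2 * \<rho>\<^sub>1 * Re (integral {0..L} (\<lambda>x. of_real (q x) * (\<Phi> x * cnj (f1x x) + f4 x * cnj (\<phi>x x))))\<bar> \<le> C * NU * NF
    \<and> \<bar>2 * \<rho>\<^sub>2 * Re (integral {0..L} (\<lambda>x. of_real (q x) * (\<Psi> x * cnj (f2x x) + f5 x * cnj (\<psi>x x))))\<bar> \<le> C * NU * NF
    \<and> \<bar>2 * \<rho>\<^sub>1 * Re (integral {0..L} (\<lambda>x. of_real (q x) * (W x * cnj (f3x x) + f6 x * cnj (wx x))))\<bar> \<le> C * NU * NF"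
proof -
  define B where "B = \<bar>q 0\<bar> + (\<integral>t. \<bar>dq t\<bar> \<partial>leb L)"
  define K where "K = energy_const L \<kappa> \<rho>\<^sub>1 b \<rho>\<^sub>2 k\<^sub>0 l"
  have B: "0 \<le> B" unfolding B_def by simp
  have K: "0 \<le> K" unfolding K_def using pos by (intro energy_const_nonneg) auto
  have N: "0 \<le> NU" "0 \<le> NF" using pos by (auto intro: Hnorm_nonneg)
  have U: "sqnorm L \<phi>x \<le> K * NU^2" "sqnorm L \<psi>x \<le> K * NU^2" "sqnorm L wx \<le> K * NU^2"
    "sqnorm L \<Phi> \<le> K * NU^2" "sqnorm L \<Psi> \<le> K * NU^2" "sqnorm L W \<le> K * NU^2"
    using sqnorms_le_Hnorm[OF pos(1,4,2,5,3,6) weak_derivs(1,3,5) \<phi>(2) \<psi>(2) w(2) L2_components(7,8,9)]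
    unfolding K_def by auto
  have "f1 L = 0" "f2 L = 0" "f3 L = 0" using f1 f2 f3 unfolding H1L_def by auto
  then have F: "sqnorm L f1x \<le> K * NF^2" "sqnorm L f2x \<le> K * NF^2" "sqnorm L f3x \<le> K * NF^2"
    "sqnorm L f4 \<le> K * NF^2" "sqnorm L f5 \<le> K * NF^2" "sqnorm L f6 \<le> K * NF^2"
    using sqnorms_le_Hnorm[OF pos(1,4,2,5,3,6) weak_derivs(10,11,12) _ _ _ L2_components(13,14,15)]
    unfolding K_def by auto
  have "0 \<le> 4 * \<rho>\<^sub>1 * B * K" "0 \<le> 4 * \<rho>\<^sub>2 * B * K"
    "4 * (\<rho>\<^sub>1 + \<rho>\<^sub>2) * B * K = 4 * \<rho>\<^sub>1 * B * K + 4 * \<rho>\<^sub>2 * B * K"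
    using pos B K by (simp_all add: algebra_simps)
  then have C: "4 * \<rho>\<^sub>1 * B * K \<le> C" "4 * \<rho>\<^sub>2 * B * K \<le> C"
    using assms[folded B_def K_def] by linarith+
  note Qm = has_weak_deriv_measurable[OF q_weak_deriv]
  show ?thesis
    by (intro conjI remainder_le[OF Qm _ B L2_components(7,10,13,2) U(4,1) F(1,4) C(1) _ K N]
        remainder_le[OF Qm _ B L2_components(8,11,14,4) U(5,2) F(2,5) C(2) _ K N]
        remainder_le[OF Qm _ B L2_components(9,12,15,6) U(6,3) F(3,6) C(1) _ K N])
      (use q_bound[folded B_def] pos in auto)+
qed

end

theorem lemma3p3:
  fixes L \<rho>\<^sub>1 \<rho>\<^sub>2 \<kappa> b k\<^sub>0 l \<gamma>\<^sub>1 \<gamma>\<^sub>2 \<gamma>\<^sub>3 :: real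
    and q dq :: "real \<Rightarrow> real"
  assumes pos: "L > 0" "\<rho>\<^sub>1 > 0" "\<rho>\<^sub>2 > 0" "\<kappa> > 0" "b > 0" "k\<^sub>0 > 0" "l > 0"
    and gpos: "\<gamma>\<^sub>1 > 0" "\<gamma>\<^sub>2 > 0" "\<gamma>\<^sub>3 > 0"
    and q: "H1 L q dq"
  shows "\<exists>C>0. \<forall>(lam::real)
      (\<phi>::real \<Rightarrow> complex) \<phi>x \<phi>xx \<psi> \<psi>x \<psi>xx w wx wxx \<Phi> \<Phi>x \<Psi> \<Psi>x W Wx
      f1 f1x f2 f2x f3 f3x f4 f5 f6.
      H2 L \<phi> \<phi>x \<phi>xx \<and> \<phi> L = 0 \<and> H2 L \<psi> \<psi>x \<psi>xx \<and> \<psi> L = 0 \<and> H2 L w wx wxx \<and> w L = 0 \<and>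
      H1L L \<Phi> \<Phi>x \<and> H1L L \<Psi> \<Psi>x \<and> H1L L W Wx \<and>
      of_real \<kappa> * (\<phi>x 0 + \<psi> 0 + of_real l * w 0) = of_real \<gamma>\<^sub>1 * \<Phi> 0 \<and>
      of_real b * \<psi>x 0 = of_real \<gamma>\<^sub>2 * \<Psi> 0 \<and>
      of_real k\<^sub>0 * (wx 0 - of_real l * \<phi> 0) = of_real \<gamma>\<^sub>3 * W 0 \<and>
      H1L L f1 f1x \<and> H1L L f2 f2x \<and> H1L L f3 f3x \<and> sqint L f4 \<and> sqint L f5 \<and> sqint L f6 \<and>
      (\<forall>x\<in>{0..L}. \<i> * of_real lam * \<phi> x - \<Phi> x = f1 x) \<and>
      (\<forall>x\<in>{0..L}. \<i> * of_real lam * \<psi> x - \<Psi> x = f2 x) \<and>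
      (\<forall>x\<in>{0..L}. \<i> * of_real lam * w x - W x = f3 x) \<and>
      (AE x in lebesgue_on {0..L}.
         \<i> * of_real lam * of_real \<rho>\<^sub>1 * \<Phi> x
         - of_real \<kappa> * (\<phi>xx x + \<psi>x x + of_real l * wx x)
         - of_real k\<^sub>0 * of_real l * (wx x - of_real l * \<phi> x) = of_real \<rho>\<^sub>1 * f4 x) \<and>
      (AE x in lebesgue_on {0..L}.
         \<i> * of_real lam * of_real \<rho>\<^sub>2 * \<Psi> x - of_real b * \<psi>xx x
         + of_real \<kappa> * (\<phi>x x + \<psi> x + of_real l * w x) = of_real \<rho>\<^sub>2 * f5 x) \<and>
      (AE x in lebesgue_on {0..L}.
         \<i> * of_real lam * of_real \<rho>\<^sub>1 * W x
         - of_real k\<^sub>0 * (wxx x - of_real l * \<phi>x x)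
         + of_real \<kappa> * of_real l * (\<phi>x x + \<psi> x + of_real l * w x) = of_real \<rho>\<^sub>1 * f6 x)
      \<longrightarrow>
      (let NU = Hnorm L \<kappa> \<rho>\<^sub>1 b \<rho>\<^sub>2 k\<^sub>0 l \<phi> \<phi>x \<psi> \<psi>x w wx \<Phi> \<Psi> W;
           NF = Hnorm L \<kappa> \<rho>\<^sub>1 b \<rho>\<^sub>2 k\<^sub>0 l f1 f1x f2 f2x f3 f3x f4 f5 f6;
           R1 = integral {0..L} (\<lambda>x. dq x * dens \<rho>\<^sub>1 \<kappa> \<Phi> \<phi>x x)
              - (bracket L (\<lambda>x. q x * dens \<rho>\<^sub>1 \<kappa> \<Phi> \<phi>x x)
                 - bracket L (\<lambda>x. k\<^sub>0 * l^2 * q x * (cmod (\<phi> x))^2)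
                 + 2 * \<kappa> * Re (integral {0..L} (\<lambda>x. of_real (q x) * \<psi>x x * cnj (\<phi>x x)))
                 + k\<^sub>0 * l^2 * integral {0..L} (\<lambda>x. dq x * (cmod (\<phi> x))^2)
                 + 2 * (\<kappa> + k\<^sub>0) * l * Re (integral {0..L} (\<lambda>x. of_real (q x) * wx x * cnj (\<phi>x x))));
           R2 = integral {0..L} (\<lambda>x. dq x * dens \<rho>\<^sub>2 b \<Psi> \<psi>x x)
              - (bracket L (\<lambda>x. q x * dens \<rho>\<^sub>2 b \<Psi> \<psi>x x)
                 - bracket L (\<lambda>x. \<kappa> * q x * (cmod (\<psi> x))^2)
                 - 2 * \<kappa> * Re (integral {0..L} (\<lambda>x. of_real (q x) * \<phi>x x * cnj (\<psi>x x)))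
                 + \<kappa> * integral {0..L} (\<lambda>x. dq x * (cmod (\<psi> x))^2)
                 - 2 * \<kappa> * l * Re (integral {0..L} (\<lambda>x. of_real (q x) * w x * cnj (\<psi>x x))));
           R3 = integral {0..L} (\<lambda>x. dq x * dens \<rho>\<^sub>1 k\<^sub>0 W wx x)
              - (bracket L (\<lambda>x. q x * dens \<rho>\<^sub>1 k\<^sub>0 W wx x)
                 - bracket L (\<lambda>x. \<kappa> * l^2 * q x * (cmod (w x))^2)
                 - 2 * \<kappa> * l * Re (integral {0..L} (\<lambda>x. of_real (q x) * \<psi> x * cnj (wx x)))
                 - 2 * (\<kappa> + k\<^sub>0) * l * Re (integral {0..L} (\<lambda>x. of_real (q x) * \<phi>x x * cnj (wx x)))
                 + \<kappa> * l^2 * integral {0..L} (\<lambda>x. dq x * (cmod (w x))^2))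
       in \<bar>R1\<bar> \<le> C * NU * NF \<and> \<bar>R2\<bar> \<le> C * NU * NF \<and> \<bar>R3\<bar> \<le> C * NU * NF)"
proof -
  define C where "C = 4 * (\<rho>\<^sub>1 + \<rho>\<^sub>2) * (\<bar>q 0\<bar> + (\<integral>t. \<bar>dq t\<bar> \<partial>leb L)) * energy_const L \<kappa> \<rho>\<^sub>1 b \<rho>\<^sub>2 k\<^sub>0 l + 1"
  have "0 \<le> 4 * (\<rho>\<^sub>1 + \<rho>\<^sub>2) * (\<bar>q 0\<bar> + (\<integral>t. \<bar>dq t\<bar> \<partial>leb L)) * energy_const L \<kappa> \<rho>\<^sub>1 b \<rho>\<^sub>2 k\<^sub>0 l"
    using pos by (intro mult_nonneg_nonneg energy_const_nonneg) auto
  then have C: "0 < C" "4 * (\<rho>\<^sub>1 + \<rho>\<^sub>2) * (\<bar>q 0\<bar> + (\<integral>t. \<bar>dq t\<bar> \<partial>leb L)) * energy_const L \<kappa> \<rho>\<^sub>1 b \<rho>\<^sub>2 k\<^sub>0 l \<le> C"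
    unfolding C_def by linarith+
  show ?thesis
  proof (intro exI[of _ C] conjI allI impI C(1), elim conjE, goal_cases)
    case (1 lam \<phi> \<phi>x \<phi>xx \<psi> \<psi>x \<psi>xx w wx wxx \<Phi> \<Phi>x \<Psi> \<Psi>x W Wx f1 f1x f2 f2x f3 f3x f4 f5 f6)
    interpret bresse_resolvent L \<rho>\<^sub>1 \<rho>\<^sub>2 \<kappa> b k\<^sub>0 l lam q dq
      \<phi> \<phi>x \<phi>xx \<psi> \<psi>x \<psi>xx w wx wxx \<Phi> \<Phi>x \<Psi> \<Psi>x W Wx f1 f1x f2 f2x f3 f3x f4 f5 f6
      by unfold_locales (fact pos q 1)+
    show ?case unfolding Let_def phi_identity psi_identity w_identity by (rule remainder_bounds[OF C(2)])
  qed
qed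

end
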